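(* Fix integers $0\le d\le m$, $\delta\in(0,1)$, $\chi>0$. There is $\varepsilon_0>0$ such that for all $0<\varepsilon<\varepsilon_0$ the following holds. Let $r>0$ with $2r^\delta<\varepsilon$, let $0<\eta\le p\le r/2$ and $0<\widetilde\eta\le\widetilde p$ satisfy (GT1): $\widetilde p\le e^\varepsilon p$ and $e^{-\varepsilon}\le\widetilde\eta/\eta\le e^\varepsilon$, and let $F=D+H:B^m[r]\to\mathbb R^m$ satisfy (GT2)–(GT3). Then for every $V\in\mathscr M^u_{p,\eta}$ there is a unique admissible graph $\mathscr F(V)\in\mathscr M^u_{\widetilde p,\widetilde\eta}$ with representing function $\widetilde G:B^d[\widetilde p]\to\mathbb R^{m-d}$ such that $\{(w,\widetilde G(w)):w\in B^d[\widetilde p]\}\subset F(V)$. Moreover, for all $V_1,V_2\in\mathscr M^u_{p,\eta}$: (1) $d_{C^0}(\mathscr F(V_1),\mathscr F(V_2))\le e^{-\chi/2}d_{C^0}(V_1,V_2)$; (2) $d_{C^1}(\mathscr F(V_1),\mathscr F(V_2))\le e^{-\chi/2}\big(d_{C^1}(V_1,V_2)+d_{C^0}(V_1,V_2)^\delta\big)$.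
   Context: $\|\cdot\|$ Euclidean norm/operator norm; $B^n[r]$ the ball of radius $r$ at $0$ in $\mathbb R^n$; $\|h\|_{C^0}=\sup\|h\|$, ${\rm Hol}_\delta(h)=\sup_{x\ne y}\|h(x)-h(y)\|/\|x-y\|^\delta$, $\|h\|_{C^1}=\|h\|_{C^0}+\|dh\|_{C^0}$. $\mathscr M^u_{p,\eta}$ is the set of graphs $\{(v,G(v)):v\in B^d[p]\}$ with $G:B^d[p]\to\mathbb R^{m-d}$ $C^{1+\delta}$ satisfying (AM1) $\|G(0)\|\le10^{-3}\eta$, (AM2) $\|dG_0\|\le\frac12\eta^\delta$, (AM3) $\|dG\|_{C^0}+{\rm Hol}_\delta(dG)\le\frac12$ on $B^d[p]$. For graphs $V_1,V_2$ with representing functions $G_1,G_2$ on the same domain, $d_{C^i}(V_1,V_2)=\|G_1-G_2\|_{C^i}$. (GT2): $D={\rm diag}(D_1,D_2)$, $D_1$ on $\mathbb R^d$, $D_2$ on $\mathbb R^{m-d}$ invertible linear with $\|D_1^{-1}\|<e^{-\chi}$, $\|D_2\|<e^{-\chi}$. (GT3): $H:B^m[r]\to\mathbb R^m$ is $C^{1+\delta}$ with $\|H(0)\|<\varepsilon\eta$, $\|dH\|_{C^0(B^m[t])}<\varepsilon t^\delta$ for all $t\in[\eta,2p]$, and ${\rm Hol}_\delta(dH)<\varepsilon$. *)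

theory Defs
  imports "HOL-Analysis.Analysis"
begin

definition c0norm :: "'x set \<Rightarrow> ('x \<Rightarrow> 'y::real_normed_vector) \<Rightarrow> real" where
  "c0norm S h = Sup ((\<lambda>x. norm (h x)) ` S)"

definition hol_quots :: "real \<Rightarrow> 'x::real_normed_vector set \<Rightarrow> ('x \<Rightarrow> 'y::real_normed_vector) \<Rightarrow> real set" where
  "hol_quots \<delta> S h = {norm (h x - h y) / (norm (x - y) powr \<delta>) | x y. x \<in> S \<and> y \<in> S \<and> x \<noteq> y}"

definition hol :: "real \<Rightarrow> 'x::real_normed_vector set \<Rightarrow> ('x \<Rightarrow> 'y::real_normed_vector) \<Rightarrow> real" where
  "hol \<delta> S h = Sup (hol_quots \<delta> S h)"

text \<open>Derivative of a map on a set S (Frechet derivative within S), as a bounded linear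
  operator, so that its norm is the operator norm.\<close>
definition dfun :: "'x::real_normed_vector set \<Rightarrow> ('x \<Rightarrow> 'y::real_normed_vector) \<Rightarrow> 'x \<Rightarrow> ('x \<Rightarrow>\<^sub>L 'y)" where
  "dfun S h x = Blinfun (frechet_derivative h (at x within S))"

definition C1delta_on :: "real \<Rightarrow> 'x::real_normed_vector set \<Rightarrow> ('x \<Rightarrow> 'y::real_normed_vector) \<Rightarrow> bool" where
  "C1delta_on \<delta> S h \<longleftrightarrow> (\<forall>x\<in>S. h differentiable (at x within S)) \<and> bdd_above (hol_quots \<delta> S (dfun S h))"

definition graph_on :: "real \<Rightarrow> ('a::euclidean_space \<Rightarrow> 'b::euclidean_space) \<Rightarrow> ('a \<times> 'b) set" where
  "graph_on p G = {(v, G v) | v. v \<in> cball 0 p}"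

definition adm_fun :: "real \<Rightarrow> real \<Rightarrow> real \<Rightarrow> ('a::euclidean_space \<Rightarrow> 'b::euclidean_space) \<Rightarrow> bool" where
  "adm_fun \<delta> p \<eta> G \<longleftrightarrow>
     C1delta_on \<delta> (cball 0 p) G \<and>
     norm (G 0) \<le> 10 powr (-3) * \<eta> \<and>
     norm (dfun (cball 0 p) G 0) \<le> 1/2 * \<eta> powr \<delta> \<and>
     c0norm (cball 0 p) (dfun (cball 0 p) G) + hol \<delta> (cball 0 p) (dfun (cball 0 p) G) \<le> 1/2"

definition Mu :: "real \<Rightarrow> real \<Rightarrow> real \<Rightarrow> ('a::euclidean_space \<times> 'b::euclidean_space) set set" where
  "Mu \<delta> p \<eta> = {graph_on p G | G. adm_fun \<delta> p \<eta> G}"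

definition dC0 :: "real \<Rightarrow> ('a::euclidean_space \<Rightarrow> 'b::euclidean_space) \<Rightarrow> ('a \<Rightarrow> 'b) \<Rightarrow> real" where
  "dC0 p G1 G2 = c0norm (cball 0 p) (\<lambda>v. G1 v - G2 v)"

definition dC1 :: "real \<Rightarrow> ('a::euclidean_space \<Rightarrow> 'b::euclidean_space) \<Rightarrow> ('a \<Rightarrow> 'b) \<Rightarrow> real" where
  "dC1 p G1 G2 = c0norm (cball 0 p) (\<lambda>v. G1 v - G2 v)
     + c0norm (cball 0 p) (\<lambda>v. dfun (cball 0 p) G1 v - dfun (cball 0 p) G2 v)"

end

theory Submission
  imports Defs
begin

text \<open>On the graph of an admissible \<open>G\<close> write \<open>F = D + H\<close> as \<open>w \<mapsto> (phi G w, psi G w)\<close> with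
  \<open>phi G w = D1 w + fst (H (w, G w))\<close>. Since \<open>D1\<close> expands by \<open>1/c\<close> and \<open>H\<close> is \<open>\<epsilon>\<close>-Lipschitz,
  \<open>phi G\<close> is injective on \<open>B[p]\<close> and, by the contraction principle, its image covers
  \<open>B[exp (2\<epsilon>) p] \<supseteq> B[pt]\<close>. Hence \<open>F(V)\<close> contains exactly one graph over \<open>B[pt]\<close>, that of
  \<open>psi G \<circ> (phi G)\<^sup>-\<^sup>1\<close>. Its derivative at \<open>phi G w\<close> is the slope \<open>(D2 M + N\<^sub>2) (D1 + N\<^sub>1)\<^sup>-\<^sup>1\<close>
  obtained from \<open>M = dG w\<close> and \<open>N = dH (w, G w)\<close>, so its sup norm and Hoelder constant are
  those of \<open>dG\<close> scaled by \<open>c\<close>, up to errors of order \<open>\<epsilon>\<close>. Comparing the preimages of one point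
  under \<open>phi G\<^sub>1\<close> and \<open>phi G\<^sub>2\<close> gives the contraction estimates. All numerical inequalities used
  hold strictly at \<open>\<epsilon> = 0\<close>, hence for all small \<open>\<epsilon>\<close>.\<close>

section \<open>Derivatives and Hoelder constants\<close>

lemma dfun_has_derivative:
  assumes "h differentiable (at x within S)"
  shows "(h has_derivative blinfun_apply (dfun S h x)) (at x within S)"
proof -
  have d: "(h has_derivative frechet_derivative h (at x within S)) (at x within S)"
    using assms frechet_derivative_works by blast
  then have "bounded_linear (frechet_derivative h (at x within S))"
    using has_derivative_bounded_linear by blast
  then show ?thesis using d unfolding dfun_def by (simp add: bounded_linear_Blinfun_apply)
qed

lemma C1delta_on_has_derivative:
  assumes "C1delta_on \<delta> S h" "x \<in> S"
  shows "(h has_derivative blinfun_apply (dfun S h x)) (at x within S)"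
  using assms dfun_has_derivative unfolding C1delta_on_def by blast

lemma has_derivative_unique_convex:
  fixes f :: "'a::real_normed_vector \<Rightarrow> 'b::real_normed_vector"
  assumes S: "convex S" "interior S \<noteq> {}" and x: "x \<in> S"
    and f1: "(f has_derivative f1) (at x within S)" and f2: "(f has_derivative f2) (at x within S)"
  shows "f1 = f2"
proof -
  define L where "L u = f1 u - f2 u" for u
  have L0: "((\<lambda>y. 0) has_derivative L) (at x within S)"
    using has_derivative_diff[OF f1 f2] unfolding L_def by simp
  interpret L: bounded_linear L using L0 by (rule has_derivative_bounded_linear)
  have L_segment: "L (z - x) = 0" if z: "z \<in> S" for z
  proof -
    define g where "g t = x + t *\<^sub>R (z - x)" for t :: real
    have g: "(g has_derivative (\<lambda>t. t *\<^sub>R (z - x))) (at 0 within cbox 0 1)"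
      unfolding g_def by (auto intro!: derivative_eq_intros)
    have "g ` cbox 0 1 \<subseteq> S"
    proof
      fix y assume "y \<in> g ` cbox 0 1"
      then obtain t where "0 \<le> t" "t \<le> 1" "y = (1 - t) *\<^sub>R x + t *\<^sub>R z"
        unfolding g_def by (auto simp: algebra_simps)
      then show "y \<in> S" using convexD_alt[OF S(1) x z] by blast
    qed
    then have "((\<lambda>y. 0) has_derivative L) (at (g 0) within g ` cbox 0 1)"
      using has_derivative_subset[OF L0] by (simp add: g_def)
    from diff_chain_within[OF g this]
    have "((\<lambda>t::real. 0::'b) has_derivative (\<lambda>t. t *\<^sub>R L (z - x))) (at 0 within cbox 0 1)"
      by (simp add: o_def L.scaleR)
    then have "(\<lambda>t. t *\<^sub>R L (z - x)) = (\<lambda>t. 0)"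
      using frechet_derivative_unique_within_closed_interval[of 0 1 0 "\<lambda>t::real. 0::'b"] by auto
    then show ?thesis by (metis scaleR_one)
  qed
  obtain a e where e: "0 < e" "ball a e \<subseteq> S"
    using S(2) mem_interior by blast
  have "L u = 0" for u
  proof -
    have u1: "0 < norm u + 1" by (simp add: add_nonneg_pos)
    define s where "s = e / (2 * (norm u + 1))"
    have s: "0 < s" using e(1) u1 unfolding s_def by simp
    have "norm (s *\<^sub>R u) \<le> s * (norm u + 1)" using s by simp
    also have "\<dots> = e / 2" unfolding s_def using u1 by (simp add: field_simps)
    finally have "norm (s *\<^sub>R u) < e" using e(1) by simp
    then have "a + s *\<^sub>R u \<in> S" "a \<in> S" using e by (auto simp: dist_norm)
    from L_segment[OF this(1)] L_segment[OF this(2)] have "s *\<^sub>R L u = 0"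
      by (simp add: L.diff L.add L.scaleR algebra_simps)
    then show ?thesis using s by simp
  qed
  then show ?thesis by (auto simp: L_def)
qed

lemma dfun_eq_if_has_derivative:
  assumes S: "convex S" "interior S \<noteq> {}" and v: "v \<in> S" and f: "(f has_derivative f') (at v)"
    and eq: "\<And>x. x \<in> S \<Longrightarrow> g x = f x"
  shows "dfun S g v = Blinfun f'" "g differentiable (at v within S)"
proof -
  have dg: "(g has_derivative f') (at v within S)"
    using has_derivative_transform[OF v eq has_derivative_at_withinI[OF f]] by auto
  then show dif: "g differentiable (at v within S)" unfolding differentiable_def by blast
  have "frechet_derivative g (at v within S) = f'"
    using has_derivative_unique_convex[OF S v _ dg] dif frechet_derivative_works by blast
  then show "dfun S g v = Blinfun f'" unfolding dfun_def by simp
qed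

lemma hol_bound:
  assumes "bdd_above (hol_quots \<delta> S f)" "x \<in> S" "y \<in> S"
  shows "norm (f x - f y) \<le> hol \<delta> S f * norm (x - y) powr \<delta>"
proof (cases "x = y")
  case False
  let ?q = "norm (f x - f y) / (norm (x - y) powr \<delta>)"
  have "?q \<in> hol_quots \<delta> S f" unfolding hol_quots_def using assms False by blast
  then have "?q \<le> hol \<delta> S f" unfolding hol_def using assms(1) by (rule cSup_upper)
  moreover have "norm (x - y) powr \<delta> > 0" using False by simp
  ultimately show ?thesis by (simp add: divide_le_eq)
qed simp

lemma hol_nonneg:
  assumes "bdd_above (hol_quots \<delta> S f)" "x \<in> S" "y \<in> S" "x \<noteq> y"
  shows "0 \<le> hol \<delta> S f"
proof -
  let ?q = "norm (f x - f y) / (norm (x - y) powr \<delta>)"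
  have "?q \<in> hol_quots \<delta> S f" unfolding hol_quots_def using assms by blast
  then have "?q \<le> hol \<delta> S f" unfolding hol_def using assms(1) by (rule cSup_upper)
  then show ?thesis by (smt (verit) divide_nonneg_nonneg norm_ge_zero powr_ge_zero)
qed

lemma hol_least:
  assumes "\<And>x y. x \<in> S \<Longrightarrow> y \<in> S \<Longrightarrow> x \<noteq> y
      \<Longrightarrow> norm (f x - f y) \<le> B * norm (x - y) powr \<delta>"
    and "x0 \<in> S" "y0 \<in> S" "x0 \<noteq> y0"
  shows "bdd_above (hol_quots \<delta> S f)" "hol \<delta> S f \<le> B"
proof -
  have le: "q \<le> B" if "q \<in> hol_quots \<delta> S f" for q
  proof -
    from that obtain x y where q: "q = norm (f x - f y) / (norm (x - y) powr \<delta>)"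
      and xy: "x \<in> S" "y \<in> S" "x \<noteq> y" unfolding hol_quots_def by blast
    have "norm (x - y) powr \<delta> > 0" using xy by simp
    then show ?thesis using q assms(1)[OF xy] by (simp add: divide_le_eq)
  qed
  have "hol_quots \<delta> S f \<noteq> {}" unfolding hol_quots_def using assms(2-4) by blast
  then show "bdd_above (hol_quots \<delta> S f)" "hol \<delta> S f \<le> B"
    unfolding hol_def using le by (auto intro!: bdd_aboveI[of _ B] cSup_least)
qed

lemma c0norm_upper:
  assumes "bdd_above ((\<lambda>x. norm (h x)) ` S)" "x \<in> S"
  shows "norm (h x) \<le> c0norm S h"
  unfolding c0norm_def using assms by (simp add: cSup_upper)

lemma c0norm_least:
  assumes "S \<noteq> {}" "\<And>x. x \<in> S \<Longrightarrow> norm (h x) \<le> B"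
  shows "c0norm S h \<le> B"
  unfolding c0norm_def using assms by (auto intro!: cSup_least)

lemma bdd_above_norm_if_hol:
  assumes "bdd_above (hol_quots \<delta> S f)" "T \<subseteq> S" "x0 \<in> S" "S \<subseteq> cball 0 R" "0 < \<delta>"
  shows "bdd_above ((\<lambda>x. norm (f x)) ` T)"
proof -
  have "norm (f x) \<le> norm (f x0) + \<bar>hol \<delta> S f\<bar> * (2*R) powr \<delta>" if "x \<in> T" for x
  proof -
    have xS: "x \<in> S" using that assms by auto
    have "norm x \<le> R" "norm x0 \<le> R" using xS assms(3,4) by auto
    then have "norm (x - x0) \<le> 2 * R" using norm_triangle_ineq4[of x x0] by linarith
    then have p: "norm (x - x0) powr \<delta> \<le> (2*R) powr \<delta>" using assms(5) by (simp add: powr_mono2)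
    have "norm (f x - f x0) \<le> hol \<delta> S f * norm (x - x0) powr \<delta>"
      using hol_bound[OF assms(1) xS assms(3)] .
    also have "\<dots> \<le> \<bar>hol \<delta> S f\<bar> * (2*R) powr \<delta>"
      by (meson abs_ge_self abs_ge_zero order.trans mult_mono p powr_ge_zero mult_right_mono)
    finally show ?thesis using norm_triangle_ineq2[of "f x" "f x0"] by linarith
  qed
  then show ?thesis by (intro bdd_aboveI2) auto
qed

lemma norm_fst_le_norm: "norm (fst z) \<le> norm z"
  by (metis norm_fst_le prod.collapse)

lemma norm_snd_le_norm: "norm (snd z) \<le> norm z"
  by (metis norm_snd_le prod.collapse)

lemma norm_blinfun_graph_le:
  fixes M :: "'a::real_normed_vector \<Rightarrow>\<^sub>L 'b::real_normed_vector"
    and N :: "('a \<times> 'b) \<Rightarrow>\<^sub>L 'c::real_normed_vector"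
  assumes "norm M \<le> 1"
  shows "norm (blinfun_apply N (x, blinfun_apply M x)) \<le> 2 * norm N * norm x"
proof -
  have "norm (x, blinfun_apply M x) \<le> norm x + norm M * norm x"
    using norm_Pair_le[of x "blinfun_apply M x"] norm_blinfun[of M x] by linarith
  also have "\<dots> \<le> 2 * norm x" using mult_right_mono[OF assms norm_ge_zero[of x]] by simp
  finally have "norm N * norm (x, blinfun_apply M x) \<le> norm N * (2 * norm x)"
    by (intro mult_left_mono) auto
  then show ?thesis using norm_blinfun[of N "(x, blinfun_apply M x)"] by simp
qed

lemma norm_blinfun_graph_diff_le:
  fixes M M' :: "'a::real_normed_vector \<Rightarrow>\<^sub>L 'b::real_normed_vector"
    and N N' :: "('a \<times> 'b) \<Rightarrow>\<^sub>L 'c::real_normed_vector"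
  assumes "norm M \<le> 1" "norm N' \<le> e"
  shows "norm (blinfun_apply N (x, blinfun_apply M x) - blinfun_apply N' (x, blinfun_apply M' x))
    \<le> (2 * norm (N - N') + e * norm (M - M')) * norm x"
proof -
  let ?a = "blinfun_apply (N - N') (x, blinfun_apply M x)"
    and ?b = "blinfun_apply N' (0, blinfun_apply (M - M') x)"
  have "(x, blinfun_apply M x) - (x, blinfun_apply M' x) = (0, blinfun_apply (M - M') x)"
    by (simp add: blinfun.diff_left)
  then have "blinfun_apply N' (x, blinfun_apply M x) - blinfun_apply N' (x, blinfun_apply M' x) = ?b"
    by (metis blinfun.diff_right)
  then have "blinfun_apply N (x, blinfun_apply M x) - blinfun_apply N' (x, blinfun_apply M' x) = ?a + ?b"
    by (simp add: blinfun.diff_left algebra_simps)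
  moreover have "norm ?a \<le> 2 * norm (N - N') * norm x"
    by (rule norm_blinfun_graph_le[OF assms(1)])
  moreover have "norm ?b \<le> e * (norm (M - M') * norm x)"
  proof -
    have "norm ?b \<le> norm N' * norm (blinfun_apply (M - M') x)"
      using norm_blinfun[of N' "(0, blinfun_apply (M - M') x)"] by (simp add: norm_Pair)
    also have "\<dots> \<le> e * (norm (M - M') * norm x)"
      using assms(2) norm_blinfun[of "M - M'" x] order.trans[OF norm_ge_zero assms(2)]
      by (intro mult_mono) auto
    finally show ?thesis .
  qed
  ultimately show ?thesis
    using norm_triangle_ineq[of ?a ?b] by (simp add: algebra_simps)
qed

lemma powr_le_two_mult:
  fixes x y a \<delta> :: real
  assumes "0 < \<delta>" "\<delta> \<le> 1" "0 \<le> x" "x \<le> a * y" "0 \<le> a" "a \<le> 2" "0 \<le> y"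
  shows "x powr \<delta> \<le> 2 * y powr \<delta>"
proof -
  have "x powr \<delta> \<le> (a * y) powr \<delta>" using assms by (intro powr_mono2) auto
  also have "\<dots> = a powr \<delta> * y powr \<delta>" using assms by (simp add: powr_mult)
  also have "\<dots> \<le> 2 * y powr \<delta>"
  proof -
    have "a powr \<delta> \<le> 2 powr \<delta>" using assms by (intro powr_mono2) auto
    also have "\<dots> \<le> 2" using powr_mono[of \<delta> 1 2] assms by simp
    finally show ?thesis by (intro mult_right_mono) auto
  qed
  finally show ?thesis .
qed

section \<open>Smallness conditions on \<open>\<epsilon>\<close>\<close>

lemma eventually_at_right_le:
  fixes f g :: "real \<Rightarrow> real"
  assumes "(f \<longlongrightarrow> f a) (at_right a)" "(g \<longlongrightarrow> g a) (at_right a)" "f a < g a"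
  shows "\<forall>\<^sub>F x in at_right a. f x \<le> g x"
proof -
  have "((\<lambda>x. g x - f x) \<longlongrightarrow> g a - f a) (at_right a)" by (intro tendsto_diff assms)
  then have "\<forall>\<^sub>F x in at_right a. 0 < g x - f x" using assms(3) by (intro order_tendstoD(1)) auto
  then show ?thesis by (rule eventually_mono) simp
qed

text \<open>Each inequality holds strictly at \<open>\<epsilon> = 0\<close> once \<open>c < 1\<close>, \<open>c < k\<close> and \<open>c\<^sup>2 < k\<close>; they are used
  with \<open>c = exp (-chi)\<close> and \<open>k = exp (-chi/2)\<close>.\<close>

definition eps_small :: "real \<Rightarrow> real \<Rightarrow> real \<Rightarrow> real \<Rightarrow> bool" where
  "eps_small \<delta> c k \<epsilon> \<longleftrightarrow>
    \<epsilon> \<le> 1/100 \<and> 1 \<le> 1/c - 2*\<epsilon> \<and>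
    c * (exp (2*\<epsilon>) + 4*\<epsilon>) \<le> 1 \<and>
    (c + 2*\<epsilon>)/2 + 10*\<epsilon> \<le> (1/c - 2*\<epsilon>)/2 \<and>
    c * (1/2 + (2*\<epsilon>) powr \<delta> / 2) + 2*\<epsilon> \<le> exp (-\<epsilon>) * (1/c - 2*\<epsilon>) / 2 \<and>
    c/1000 + 4*\<epsilon> \<le> exp (-\<epsilon>) / 1000 \<and>
    c + 4*\<epsilon> \<le> k \<and>
    c + 2*\<epsilon> \<le> k * (1/c - 2*\<epsilon>) \<and>
    (c + 2*\<epsilon>) * \<epsilon> powr \<delta> / 2 + 8*\<epsilon> \<le> k * (1/c - 2*\<epsilon>)"

lemma eventually_eps_small:
  assumes "0 < \<delta>" "0 < c" "c < 1" "c < k" "c * c < k"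
  shows "\<forall>\<^sub>F \<epsilon> in at_right 0. eps_small \<delta> c k \<epsilon>"
proof -
  have nonneg: "\<forall>\<^sub>F x in at_right (0::real). 0 \<le> x"
    using eventually_at_right_less[of 0] by (rule eventually_mono) simp
  have powr_lim: "((\<lambda>x. (2*x) powr \<delta>) \<longlongrightarrow> (2*0) powr \<delta>) (at_right 0)"
    "((\<lambda>x. x powr \<delta>) \<longlongrightarrow> 0 powr \<delta>) (at_right 0)"
    using nonneg assms(1)
    by (auto intro!: tendsto_zero_powrI tendsto_eq_intros elim: eventually_mono)
  have c_inv: "c < 1/c" "c < k/c" "0 < k/c" using assms by (simp_all add: field_simps)
    (smt (verit) mult_less_cancel_left2)
  show ?thesis
    unfolding eps_small_def
    by (intro eventually_conj; rule eventually_at_right_le;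
        (intro powr_lim tendsto_intros tendsto_ident_at)?; simp add: assms c_inv)
qed

section \<open>The linearized graph transform\<close>

locale expanding_contracting =
  fixes D1 :: "'a::euclidean_space \<Rightarrow> 'a" and D2 :: "'b::euclidean_space \<Rightarrow> 'b" and c \<epsilon> :: real
  assumes D1_linear: "linear D1" and D1_bij: "bij D1"
    and norm_inv_D1_le: "\<And>y. norm (inv D1 y) \<le> c * norm y"
    and D2_linear: "linear D2" and norm_D2_le: "\<And>y. norm (D2 y) \<le> c * norm y"
    and c_pos: "0 < c" and eps_pos: "0 < \<epsilon>" and one_le_expansion: "1 \<le> 1/c - 2*\<epsilon>"
begin

definition expansion :: real where "expansion = 1/c - 2*\<epsilon>"

lemma expansion_ge_1: "1 \<le> expansion"
  using one_le_expansion unfolding expansion_def .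

lemma expansion_pos: "0 < expansion"
  using expansion_ge_1 by simp

lemma le_if_expansion_mult_le: "expansion * a \<le> b \<Longrightarrow> 0 \<le> a \<Longrightarrow> a \<le> b"
  using mult_right_mono[OF expansion_ge_1, of a] by simp

text \<open>\<open>push_hor M N\<close> and \<open>push_vert M N\<close> are the two components of \<open>(D1 \<times> D2) + N\<close>
  restricted to the graph of the linear map \<open>M\<close>; \<open>push_slope M N\<close> is the linear map whose graph
  is the image of that graph.\<close>

definition push_hor :: "('a \<Rightarrow>\<^sub>L 'b) \<Rightarrow> (('a \<times> 'b) \<Rightarrow>\<^sub>L ('a \<times> 'b)) \<Rightarrow> 'a \<Rightarrow> 'a" where
  "push_hor M N x = D1 x + fst (blinfun_apply N (x, blinfun_apply M x))"

definition push_vert :: "('a \<Rightarrow>\<^sub>L 'b) \<Rightarrow> (('a \<times> 'b) \<Rightarrow>\<^sub>L ('a \<times> 'b)) \<Rightarrow> 'a \<Rightarrow> 'b" where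
  "push_vert M N x = D2 (blinfun_apply M x) + snd (blinfun_apply N (x, blinfun_apply M x))"

definition push_slope :: "('a \<Rightarrow>\<^sub>L 'b) \<Rightarrow> (('a \<times> 'b) \<Rightarrow>\<^sub>L ('a \<times> 'b)) \<Rightarrow> 'a \<Rightarrow> 'b" where
  "push_slope M N = push_vert M N \<circ> inv (push_hor M N)"

lemma norm_le_D1: "norm x \<le> c * norm (D1 x)"
  using norm_inv_D1_le[of "D1 x"] D1_bij by (simp add: bij_is_inj)

lemma D1_inv_D1: "D1 (inv D1 y) = y"
  using D1_bij by (simp add: bij_is_surj surj_f_inv_f)

lemma linear_inv_D1: "linear (inv D1)"
  using inj_linear_imp_inv_linear[OF D1_linear] D1_bij by (simp add: bij_is_inj)

lemma linear_push_hor: "linear (push_hor M N)"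
proof -
  have "(x + y, blinfun_apply M (x + y)) = (x, blinfun_apply M x) + (y, blinfun_apply M y)"
    "(r *\<^sub>R x, blinfun_apply M (r *\<^sub>R x)) = r *\<^sub>R (x, blinfun_apply M x)" for x y r
    by (simp_all add: blinfun.add_right blinfun.scaleR_right)
  then show ?thesis unfolding linear_iff push_hor_def
    by (simp add: linear_add[OF D1_linear] linear_scale[OF D1_linear] blinfun.add_right
        blinfun.scaleR_right scaleR_add_right del: add_Pair scaleR_Pair)
qed

lemma linear_push_vert: "linear (push_vert M N)"
proof -
  have "(x + y, blinfun_apply M (x + y)) = (x, blinfun_apply M x) + (y, blinfun_apply M y)"
    "(r *\<^sub>R x, blinfun_apply M (r *\<^sub>R x)) = r *\<^sub>R (x, blinfun_apply M x)" for x y r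
    by (simp_all add: blinfun.add_right blinfun.scaleR_right)
  then show ?thesis unfolding linear_iff push_vert_def
    by (simp add: linear_add[OF D2_linear] linear_scale[OF D2_linear] blinfun.add_right
        blinfun.scaleR_right scaleR_add_right del: add_Pair scaleR_Pair)
qed

lemma expansion_le_push_hor:
  assumes "norm M \<le> 1" "norm N \<le> \<epsilon>"
  shows "expansion * norm x \<le> norm (push_hor M N x)"
proof -
  let ?n = "fst (blinfun_apply N (x, blinfun_apply M x))"
  have "norm x / c \<le> norm (D1 x)"
    using norm_le_D1[of x] c_pos by (simp add: divide_le_eq mult.commute)
  moreover have "norm ?n \<le> 2 * \<epsilon> * norm x"
    using norm_blinfun_graph_le[OF assms(1), of N x] norm_fst_le_norm[of "blinfun_apply N (x, blinfun_apply M x)"]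
      assms(2)
    by (smt (verit) mult_right_mono norm_ge_zero)
  moreover have "norm (D1 x) - norm ?n \<le> norm (push_hor M N x)"
    unfolding push_hor_def by (metis norm_diff_ineq norm_minus_commute diff_minus_eq_add)
  ultimately show ?thesis unfolding expansion_def by (simp add: algebra_simps)
qed

context
  fixes M :: "'a \<Rightarrow>\<^sub>L 'b" and N :: "('a \<times> 'b) \<Rightarrow>\<^sub>L ('a \<times> 'b)"
  assumes M: "norm M \<le> 1" and N: "norm N \<le> \<epsilon>"
begin

lemma push_hor_inj: "inj (push_hor M N)"
proof (rule linear_injective_0[OF linear_push_hor, THEN iffD2], intro allI impI)
  fix x assume "push_hor M N x = 0"
  then show "x = 0" using expansion_le_push_hor[OF M N, of x] expansion_pos by (simp add: mult_le_0_iff)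
qed

lemma push_hor_bij: "bij (push_hor M N)"
  using push_hor_inj linear_inj_imp_surj[OF linear_push_hor push_hor_inj] by (simp add: bij_def)

lemma push_hor_inv: "push_hor M N (inv (push_hor M N) y) = y" "inv (push_hor M N) (push_hor M N x) = x"
  using push_hor_bij push_hor_inj by (simp_all add: bij_is_surj surj_f_inv_f)

lemma linear_inv_push_hor: "linear (inv (push_hor M N))"
  using inj_linear_imp_inv_linear[OF linear_push_hor push_hor_inj] .

lemma norm_inv_push_hor_le: "norm (inv (push_hor M N) y) \<le> norm y / expansion"
  using expansion_le_push_hor[OF M N, of "inv (push_hor M N) y"] push_hor_inv(1)[of y] expansion_pos
  by (simp add: le_divide_eq mult.commute)

lemma norm_push_vert_le: "norm (push_vert M N x) \<le> (c * norm M + 2 * norm N) * norm x"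
proof -
  have "norm (D2 (blinfun_apply M x)) \<le> c * (norm M * norm x)"
    using norm_D2_le[of "blinfun_apply M x"] norm_blinfun[of M x] c_pos by (smt (verit) mult_left_mono)
  moreover have "norm (snd (blinfun_apply N (x, blinfun_apply M x))) \<le> 2 * norm N * norm x"
    using norm_blinfun_graph_le[OF M, of N x] norm_snd_le_norm order_trans by blast
  ultimately show ?thesis unfolding push_vert_def
    using norm_triangle_ineq[of "D2 (blinfun_apply M x)" "snd (blinfun_apply N (x, blinfun_apply M x))"]
    by (simp add: algebra_simps)
qed

lemma linear_push_slope: "linear (push_slope M N)"
  unfolding push_slope_def using linear_compose[OF linear_inv_push_hor linear_push_vert] .

lemma bounded_linear_push_slope: "bounded_linear (push_slope M N)"
  using linear_push_slope linear_conv_bounded_linear by blast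

lemma norm_push_slope_le:
  "norm (push_slope M N y) \<le> (c * norm M + 2 * norm N) / expansion * norm y"
proof -
  have "norm (push_slope M N y) \<le> (c * norm M + 2 * norm N) * norm (inv (push_hor M N) y)"
    unfolding push_slope_def using norm_push_vert_le by simp
  also have "\<dots> \<le> (c * norm M + 2 * norm N) * (norm y / expansion)"
    using norm_inv_push_hor_le c_pos by (intro mult_left_mono) auto
  finally show ?thesis by simp
qed

lemma push_slope_push_hor: "push_slope M N (push_hor M N x) = push_vert M N x"
  unfolding push_slope_def using push_hor_inv(2) by simp

end

text \<open>With \<open>x = inv (push_hor M N) y\<close> the difference of the two slopes applied to \<open>y\<close> is
  \<open>(push_vert M N - push_vert M' N') x - push_slope M' N' ((push_hor M N - push_hor M' N') x)\<close>.\<close>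

lemma norm_push_slope_diff_le:
  assumes M: "norm M \<le> 1" "norm N \<le> \<epsilon>" and M': "norm M' \<le> 1" "norm N' \<le> \<epsilon>"
    and small: "c + 2*\<epsilon> \<le> expansion"
  shows "norm (push_slope M N y - push_slope M' N' y)
    \<le> ((c + 2*\<epsilon>) * norm (M - M') + 4 * norm (N - N')) / expansion * norm y"
proof -
  let ?\<mu> = "norm (M - M')" and ?\<nu> = "norm (N - N')"
  define x where "x = inv (push_hor M N) y"
  define d where "d = blinfun_apply N (x, blinfun_apply M x) - blinfun_apply N' (x, blinfun_apply M' x)"
  have norm_d: "norm d \<le> (2 * ?\<nu> + \<epsilon> * ?\<mu>) * norm x"
    unfolding d_def by (rule norm_blinfun_graph_diff_le[OF M(1) M'(2)])
  have norm_x: "norm x \<le> norm y / expansion"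
    unfolding x_def by (rule norm_inv_push_hor_le[OF M])
  define t where "t = (c * norm M' + 2 * norm N') / expansion"
  have t: "0 \<le> t" "t \<le> 1"
  proof -
    have "c * norm M' + 2 * norm N' \<le> c * 1 + 2 * \<epsilon>"
      using M' c_pos by (intro add_mono mult_left_mono) auto
    then show "0 \<le> t" "t \<le> 1" unfolding t_def using small c_pos expansion_pos by simp_all
  qed
  interpret T': linear "push_slope M' N'" by (rule linear_push_slope[OF M'])
  have "push_slope M N y = push_vert M N x"
    unfolding x_def using push_slope_push_hor[OF M] push_hor_inv(1)[OF M] by metis
  moreover have "push_slope M' N' y = push_vert M' N' x + push_slope M' N' (fst d)"
  proof -
    have "y = push_hor M' N' x + fst d"
      unfolding x_def d_def using push_hor_inv(1)[OF M, of y] by (simp add: push_hor_def)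
    then show ?thesis using push_slope_push_hor[OF M'] by (simp add: T'.add)
  qed
  moreover have "push_vert M N x - push_vert M' N' x = D2 (blinfun_apply (M - M') x) + snd d"
    unfolding push_vert_def d_def by (simp add: linear_diff[OF D2_linear, symmetric] blinfun.diff_left)
  ultimately have slope_diff: "push_slope M N y - push_slope M' N' y
      = D2 (blinfun_apply (M - M') x) + snd d - push_slope M' N' (fst d)"
    by (metis diff_diff_eq)
  have "norm (push_slope M N y - push_slope M' N' y)
      \<le> norm (D2 (blinfun_apply (M - M') x)) + norm (snd d) + norm (push_slope M' N' (fst d))"
    unfolding slope_diff
    using norm_triangle_ineq4[of "D2 (blinfun_apply (M - M') x) + snd d" "push_slope M' N' (fst d)"]
      norm_triangle_ineq[of "D2 (blinfun_apply (M - M') x)" "snd d"] by linarith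
  also have "\<dots> \<le> c * ?\<mu> * norm x + norm d + t * norm d"
  proof -
    have "norm (D2 (blinfun_apply (M - M') x)) \<le> c * (?\<mu> * norm x)"
      using norm_D2_le[of "blinfun_apply (M - M') x"] mult_left_mono[OF norm_blinfun[of "M - M'" x], of c]
        c_pos by linarith
    moreover have "norm (push_slope M' N' (fst d)) \<le> t * norm d"
      using norm_push_slope_le[OF M', of "fst d"] mult_left_mono[OF norm_fst_le_norm[of d] t(1)]
      unfolding t_def by linarith
    ultimately show ?thesis using norm_snd_le_norm[of d] by simp
  qed
  also have "\<dots> \<le> c * ?\<mu> * norm x + 2 * ((2 * ?\<nu> + \<epsilon> * ?\<mu>) * norm x)"
    using norm_d mult_right_mono[OF t(2) norm_ge_zero[of d]] by linarith
  also have "\<dots> = ((c + 2*\<epsilon>) * ?\<mu> + 4 * ?\<nu>) * norm x"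
    by (simp add: algebra_simps)
  also have "\<dots> \<le> ((c + 2*\<epsilon>) * ?\<mu> + 4 * ?\<nu>) * (norm y / expansion)"
    using norm_x c_pos eps_pos by (intro mult_left_mono) auto
  finally show ?thesis by simp
qed

end

section \<open>The graph transform of an admissible graph\<close>

locale graph_transform = expanding_contracting D1 D2 c \<epsilon>
  for D1 :: "'a::euclidean_space \<Rightarrow> 'a" and D2 :: "'b::euclidean_space \<Rightarrow> 'b" and c \<epsilon> :: real +
  fixes \<delta> r p \<eta> pt \<eta>t k :: real and H :: "'a \<times> 'b \<Rightarrow> 'a \<times> 'b"
  assumes delta_pos: "0 < \<delta>" and delta_lt_1: "\<delta> < 1" and c_lt_1: "c < 1"
    and small: "eps_small \<delta> c k \<epsilon>"
    and r_pos: "0 < r" and r_small: "2 * r powr \<delta> < \<epsilon>"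
    and eta_pos: "0 < \<eta>" and eta_le_p: "\<eta> \<le> p" and p_le_r: "p \<le> r / 2"
    and etat_pos: "0 < \<eta>t" and etat_le_pt: "\<eta>t \<le> pt"
    and pt_le: "pt \<le> exp \<epsilon> * p" and etat_ge: "exp (-\<epsilon>) \<le> \<eta>t / \<eta>"
    and H_C1: "C1delta_on \<delta> (cball 0 r) H" and norm_H_0: "norm (H 0) < \<epsilon> * \<eta>"
    and dH_c0_small: "\<forall>t\<in>{\<eta>..2*p}. c0norm (cball 0 t) (dfun (cball 0 r) H) < \<epsilon> * t powr \<delta>"
    and dH_hol_small: "hol \<delta> (cball 0 r) (dfun (cball 0 r) H) < \<epsilon>"
begin

lemma eps_le: "\<epsilon> \<le> 1/100"
  and self_map_cond: "c * (exp (2*\<epsilon>) + 4*\<epsilon>) \<le> 1"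
  and slope_cond: "(c + 2*\<epsilon>)/2 + 10*\<epsilon> \<le> expansion/2"
  and slope_at_0_cond: "c * (1/2 + (2*\<epsilon>) powr \<delta> / 2) + 2*\<epsilon> \<le> exp (-\<epsilon>) * expansion / 2"
  and offset_at_0_cond: "c/1000 + 4*\<epsilon> \<le> exp (-\<epsilon>) / 1000"
  and C0_contraction_cond: "c + 4*\<epsilon> \<le> k"
  and C1_contraction_cond: "c + 2*\<epsilon> \<le> k * expansion"
    "(c + 2*\<epsilon>) * \<epsilon> powr \<delta> / 2 + 8*\<epsilon> \<le> k * expansion"
  using small unfolding eps_small_def expansion_def by simp_all

lemma slope_bound_cond: "c + 2*\<epsilon> \<le> expansion"
proof -
  have "c + 22*\<epsilon> \<le> expansion" using slope_cond by (simp add: field_simps)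
  then show ?thesis using eps_pos by linarith
qed

lemma p_pos: "0 < p"
  using eta_pos eta_le_p by simp

lemma pt_pos: "0 < pt"
  using etat_pos etat_le_pt by simp

definition dH :: "'a \<times> 'b \<Rightarrow> ('a \<times> 'b) \<Rightarrow>\<^sub>L ('a \<times> 'b)" where
  "dH X = dfun (cball 0 r) H X"

lemma H_has_derivative: "X \<in> cball 0 r \<Longrightarrow> (H has_derivative blinfun_apply (dH X)) (at X within cball 0 r)"
  unfolding dH_def by (rule C1delta_on_has_derivative[OF H_C1])

lemma H_has_derivative_at: "norm X < r \<Longrightarrow> (H has_derivative blinfun_apply (dH X)) (at X)"
  using H_has_derivative[of X] at_within_interior[of X "cball 0 r"] by simp

lemma hol_quots_dH_bdd: "bdd_above (hol_quots \<delta> (cball 0 r) (dfun (cball 0 r) H))"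
  using H_C1 unfolding C1delta_on_def by (rule conjunct2)

lemma norm_dH_le:
  assumes "t \<in> {\<eta>..2*p}" "X \<in> cball 0 t"
  shows "norm (dH X) \<le> \<epsilon> * t powr \<delta>"
proof -
  have "cball (0::'a\<times>'b) t \<subseteq> cball 0 r" using assms(1) p_le_r by auto
  then have "bdd_above ((\<lambda>x. norm (dfun (cball 0 r) H x)) ` cball 0 t)"
    using bdd_above_norm_if_hol[OF hol_quots_dH_bdd _ _ order_refl delta_pos] r_pos
    by (metis centre_in_cball less_imp_le)
  then have "norm (dH X) \<le> c0norm (cball 0 t) (dfun (cball 0 r) H)"
    unfolding dH_def using assms(2) by (rule c0norm_upper)
  then show ?thesis using dH_c0_small assms(1) by fastforce
qed

lemma norm_dH_le_eps:
  assumes "X \<in> cball 0 (2*p)"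
  shows "norm (dH X) \<le> \<epsilon>"
proof -
  have "norm (dH X) \<le> \<epsilon> * (2*p) powr \<delta>" using norm_dH_le[OF _ assms] eta_le_p p_pos by simp
  also have "\<dots> \<le> \<epsilon> * r powr \<delta>"
    using p_le_r p_pos delta_pos eps_pos by (intro mult_left_mono powr_mono2) auto
  also have "\<dots> \<le> \<epsilon> * 1"
    using r_small eps_le eps_pos by (intro mult_left_mono) auto
  finally show ?thesis by simp
qed

lemma norm_dH_le_eta: "X \<in> cball 0 \<eta> \<Longrightarrow> norm (dH X) \<le> \<epsilon> * \<eta> powr \<delta>"
  using norm_dH_le[of \<eta>] eta_le_p eta_pos by simp

lemma dH_hol_bound:
  assumes "X \<in> cball 0 r" "Y \<in> cball 0 r"
  shows "norm (dH X - dH Y) \<le> \<epsilon> * norm (X - Y) powr \<delta>"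
proof -
  have "norm (dH X - dH Y) \<le> hol \<delta> (cball 0 r) (dfun (cball 0 r) H) * norm (X - Y) powr \<delta>"
    unfolding dH_def by (rule hol_bound[OF hol_quots_dH_bdd assms])
  also have "\<dots> \<le> \<epsilon> * norm (X - Y) powr \<delta>" using dH_hol_small by (intro mult_right_mono) auto
  finally show ?thesis .
qed

lemma H_lipschitz:
  assumes "X \<in> cball 0 (2*p)" "Y \<in> cball 0 (2*p)"
  shows "norm (H X - H Y) \<le> \<epsilon> * norm (X - Y)"
proof (rule differentiable_bound[OF convex_cball _ _ assms])
  fix Z assume Z: "Z \<in> cball (0::'a\<times>'b) (2*p)"
  have "cball (0::'a\<times>'b) (2*p) \<subseteq> cball 0 r" using p_le_r by auto
  then show "(H has_derivative blinfun_apply (dH Z)) (at Z within cball 0 (2*p))"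
    using H_has_derivative Z by (meson has_derivative_subset subsetD)
  show "onorm (blinfun_apply (dH Z)) \<le> \<epsilon>" using norm_dH_le_eps[OF Z] by (simp add: norm_blinfun.rep_eq)
qed

lemma ten_powr_minus_3: "(10::real) powr (-3) = 1/1000"
  by (simp add: powr_minus powr_realpow)

end

context graph_transform
begin

definition dG :: "('a \<Rightarrow> 'b) \<Rightarrow> 'a \<Rightarrow> ('a \<Rightarrow>\<^sub>L 'b)" where
  "dG G w = dfun (cball 0 p) G w"

definition phi :: "('a \<Rightarrow> 'b) \<Rightarrow> 'a \<Rightarrow> 'a" where
  "phi G w = D1 w + fst (H (w, G w))"

definition psi :: "('a \<Rightarrow> 'b) \<Rightarrow> 'a \<Rightarrow> 'b" where
  "psi G w = D2 (G w) + snd (H (w, G w))"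

definition R :: real where
  "R = exp (2*\<epsilon>) * p"

definition phi_inv :: "('a \<Rightarrow> 'b) \<Rightarrow> 'a \<Rightarrow> 'a" where
  "phi_inv G v = (THE w. w \<in> cball 0 p \<and> phi G w = v)"

definition Gtilde :: "('a \<Rightarrow> 'b) \<Rightarrow> 'a \<Rightarrow> 'b" where
  "Gtilde G v = psi G (phi_inv G v)"

definition dGtilde :: "('a \<Rightarrow> 'b) \<Rightarrow> 'a \<Rightarrow> 'a \<Rightarrow> 'b" where
  "dGtilde G v = push_slope (dG G (phi_inv G v)) (dH (phi_inv G v, G (phi_inv G v)))"

definition sup_dG :: "('a \<Rightarrow> 'b) \<Rightarrow> real" where
  "sup_dG G = c0norm (cball 0 p) (dG G)"

definition hol_dG :: "('a \<Rightarrow> 'b) \<Rightarrow> real" where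
  "hol_dG G = hol \<delta> (cball 0 p) (dG G)"

lemma dG_eq: "dG G = dfun (cball 0 p) G"
  by (rule ext) (simp add: dG_def)

lemma pt_lt_R: "pt < R"
proof -
  have "exp \<epsilon> * p < exp (2*\<epsilon>) * p" using eps_pos p_pos by (intro mult_strict_right_mono) auto
  then show ?thesis using pt_le unfolding R_def by simp
qed

lemma p_le_R: "p \<le> R"
  unfolding R_def using eps_pos p_pos by (simp add: mult_le_cancel_right1)

lemma R_cond: "c * (R + 4*\<epsilon>*p) \<le> p"
proof -
  have "c * (R + 4*\<epsilon>*p) = c * (exp (2*\<epsilon>) + 4*\<epsilon>) * p" unfolding R_def by (simp add: algebra_simps)
  also have "\<dots> \<le> p" using self_map_cond p_pos by (simp add: mult_le_cancel_right1)
  finally show ?thesis .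
qed

context
  fixes G :: "'a \<Rightarrow> 'b"
  assumes adm: "adm_fun \<delta> p \<eta> G"
begin

lemma G_C1: "C1delta_on \<delta> (cball 0 p) G"
  using adm unfolding adm_fun_def by simp

lemma norm_G_0: "norm (G 0) \<le> \<eta>/1000"
  using adm unfolding adm_fun_def ten_powr_minus_3 by simp

lemma norm_dG_0: "norm (dG G 0) \<le> 1/2 * \<eta> powr \<delta>"
  using adm unfolding adm_fun_def dG_def by simp

lemma hol_quots_dG_bdd: "bdd_above (hol_quots \<delta> (cball 0 p) (dG G))"
  using G_C1 unfolding C1delta_on_def dG_eq by (rule conjunct2)

lemma norm_dG_le_sup: "w \<in> cball 0 p \<Longrightarrow> norm (dG G w) \<le> sup_dG G"
  unfolding sup_dG_def
  using bdd_above_norm_if_hol[OF hol_quots_dG_bdd order_refl _ order_refl delta_pos] p_pos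
  by (intro c0norm_upper) (auto intro: centre_in_cball[THEN iffD2])

lemma dG_hol_bound:
  "w \<in> cball 0 p \<Longrightarrow> w' \<in> cball 0 p \<Longrightarrow> norm (dG G w - dG G w') \<le> hol_dG G * norm (w - w') powr \<delta>"
  unfolding hol_dG_def by (rule hol_bound[OF hol_quots_dG_bdd])

lemma sup_hol_dG: "0 \<le> sup_dG G" "0 \<le> hol_dG G" "sup_dG G + hol_dG G \<le> 1/2"
proof -
  show "0 \<le> sup_dG G" using norm_dG_le_sup[of 0] p_pos by (smt (verit) centre_in_cball norm_ge_zero)
  obtain x :: 'a where x: "norm x = p" using vector_choose_size p_pos by (meson less_imp_le)
  then have "x \<in> cball 0 p" "(0::'a) \<in> cball 0 p" "x \<noteq> 0" using p_pos by auto
  then show "0 \<le> hol_dG G" unfolding hol_dG_def using hol_nonneg[OF hol_quots_dG_bdd] by blast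
  show "sup_dG G + hol_dG G \<le> 1/2" using adm unfolding adm_fun_def sup_dG_def hol_dG_def dG_eq by simp
qed

lemma norm_dG_le_half: "w \<in> cball 0 p \<Longrightarrow> norm (dG G w) \<le> 1/2"
  using norm_dG_le_sup sup_hol_dG by fastforce

lemma G_has_derivative: "w \<in> cball 0 p \<Longrightarrow> (G has_derivative blinfun_apply (dG G w)) (at w within cball 0 p)"
  unfolding dG_def by (rule C1delta_on_has_derivative[OF G_C1])

lemma G_has_derivative_at: "norm w < p \<Longrightarrow> (G has_derivative blinfun_apply (dG G w)) (at w)"
  using G_has_derivative[of w] at_within_interior[of w "cball 0 p"] by simp

lemma G_lipschitz:
  assumes "w \<in> cball 0 p" "w' \<in> cball 0 p"
  shows "norm (G w - G w') \<le> 1/2 * norm (w - w')"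
proof (rule differentiable_bound[OF convex_cball _ _ assms])
  fix x assume x: "x \<in> cball (0::'a) p"
  show "(G has_derivative blinfun_apply (dG G x)) (at x within cball 0 p)" by (rule G_has_derivative[OF x])
  show "onorm (blinfun_apply (dG G x)) \<le> 1/2" using norm_dG_le_half[OF x] by (simp add: norm_blinfun.rep_eq)
qed

lemma norm_G_le: "w \<in> cball 0 p \<Longrightarrow> norm (G w) \<le> \<eta>/1000 + norm w / 2"
  using G_lipschitz[of w 0] p_pos norm_G_0 norm_triangle_ineq2[of "G w" "G 0"] by simp

lemma norm_graph_point_le: "w \<in> cball 0 p \<Longrightarrow> norm (w, G w) \<le> 3/2 * norm w + \<eta>/1000"
  using norm_Pair_le[of w "G w"] norm_G_le[of w] by simp

lemma graph_point_in_cball: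
  assumes "w \<in> cball 0 p"
  shows "(w, G w) \<in> cball 0 (2*p)" "(w, G w) \<in> cball 0 r" "norm (w, G w) < r"
proof -
  have "norm (w, G w) \<le> 3/2 * p + p/1000" using norm_graph_point_le[OF assms] assms eta_le_p by simp
  then show "(w, G w) \<in> cball 0 (2*p)" "(w, G w) \<in> cball 0 r" "norm (w, G w) < r"
    using p_pos p_le_r by simp_all
qed

lemma norm_graph_point_diff_le:
  assumes "w \<in> cball 0 p" "w' \<in> cball 0 p"
  shows "norm ((w, G w) - (w', G w')) \<le> 3/2 * norm (w - w')"
  using norm_Pair_le[of "w - w'" "G w - G w'"] G_lipschitz[OF assms] by simp

lemma H_graph_lipschitz:
  assumes "w \<in> cball 0 p" "w' \<in> cball 0 p"
  shows "norm (H (w, G w) - H (w', G w')) \<le> 2 * \<epsilon> * norm (w - w')"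
proof -
  have "norm (H (w, G w) - H (w', G w')) \<le> \<epsilon> * norm ((w, G w) - (w', G w'))"
    by (rule H_lipschitz[OF graph_point_in_cball(1)[OF assms(1)] graph_point_in_cball(1)[OF assms(2)]])
  also have "\<dots> \<le> \<epsilon> * (3/2 * norm (w - w'))"
    using norm_graph_point_diff_le[OF assms] eps_pos by (intro mult_left_mono) auto
  also have "\<dots> \<le> 2 * \<epsilon> * norm (w - w')"
    using eps_pos by (simp add: mult_right_mono)
  finally show ?thesis .
qed

lemma norm_H_graph_0_le: "norm (H (0, G 0)) \<le> 2 * \<epsilon> * \<eta>"
proof -
  have "norm (H (0, G 0) - H 0) \<le> \<epsilon> * norm (G 0)"
    using H_lipschitz[OF graph_point_in_cball(1)[of 0], of 0] p_pos by (simp add: norm_Pair)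
  also have "\<dots> \<le> \<epsilon> * (\<eta>/1000)"
    using norm_G_0 eps_pos by (intro mult_left_mono) auto
  finally show ?thesis
    using norm_H_0 norm_triangle_ineq2[of "H (0, G 0)" "H 0"] mult_pos_pos[OF eps_pos eta_pos] by simp
qed

lemma norm_H_graph_le: "w \<in> cball 0 p \<Longrightarrow> norm (H (w, G w)) \<le> 2 * \<epsilon> * \<eta> + 2 * \<epsilon> * norm w"
  using H_graph_lipschitz[of w 0] norm_H_graph_0_le norm_triangle_ineq2[of "H (w, G w)" "H (0, G 0)"] p_pos
  by simp

lemma expansion_le_phi_diff:
  assumes "w \<in> cball 0 p" "w' \<in> cball 0 p"
  shows "expansion * norm (w - w') \<le> norm (phi G w - phi G w')"
proof -
  let ?h = "fst (H (w, G w) - H (w', G w'))"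
  have "phi G w - phi G w' = D1 (w - w') + ?h"
    unfolding phi_def by (simp add: linear_diff[OF D1_linear])
  then have "norm (D1 (w - w')) - norm ?h \<le> norm (phi G w - phi G w')"
    by (metis norm_diff_ineq norm_minus_commute diff_minus_eq_add)
  moreover have "norm (w - w') / c \<le> norm (D1 (w - w'))"
    using norm_le_D1[of "w - w'"] c_pos by (simp add: divide_le_eq mult.commute)
  moreover have "norm ?h \<le> 2 * \<epsilon> * norm (w - w')"
    using H_graph_lipschitz[OF assms] norm_fst_le_norm order.trans by blast
  ultimately show ?thesis unfolding expansion_def by (simp add: algebra_simps)
qed

lemma phi_inj: "w \<in> cball 0 p \<Longrightarrow> w' \<in> cball 0 p \<Longrightarrow> phi G w = phi G w' \<Longrightarrow> w = w'"
  using expansion_le_phi_diff expansion_pos by (fastforce simp: mult_le_0_iff)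

lemma norm_inv_D1_graph_le:
  assumes "w \<in> cball 0 p"
  shows "norm (inv D1 (v - fst (H (w, G w)))) \<le> c * (norm v + 4*\<epsilon>*p)"
proof -
  have "norm (inv D1 (v - fst (H (w, G w)))) \<le> c * norm (v - fst (H (w, G w)))"
    by (rule norm_inv_D1_le)
  also have "\<dots> \<le> c * (norm v + norm (H (w, G w)))"
    using c_pos norm_triangle_ineq4[of v "fst (H (w, G w))"] norm_fst_le_norm[of "H (w, G w)"]
    by (intro mult_left_mono) auto
  also have "\<dots> \<le> c * (norm v + 4*\<epsilon>*p)"
  proof -
    have "2 * \<epsilon> * norm w \<le> 2 * \<epsilon> * p" "2 * \<epsilon> * \<eta> \<le> 2 * \<epsilon> * p"
      using assms eps_pos eta_le_p by (auto intro: mult_left_mono)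
    then have "norm (H (w, G w)) \<le> 4*\<epsilon>*p" using norm_H_graph_le[OF assms] by linarith
    then show ?thesis using c_pos by (intro mult_left_mono add_left_mono) auto
  qed
  finally show ?thesis .
qed

text \<open>Surjectivity onto \<open>cball 0 R\<close>: a preimage of \<open>v\<close> is a fixed point of the contraction
  \<open>w \<mapsto> inv D1 (v - fst (H (w, G w)))\<close> of \<open>cball 0 p\<close>.\<close>

lemma phi_surj:
  assumes v: "v \<in> cball 0 R"
  shows "\<exists>w\<in>cball 0 p. phi G w = v"
proof -
  define f where "f w = inv D1 (v - fst (H (w, G w)))" for w
  have "\<exists>!w\<in>cball 0 p. f w = w"
  proof (rule Banach_fix[of _ "c * (2*\<epsilon>)"])
    show "complete (cball (0::'a) p)" by (simp add: compact_imp_complete)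
    show "cball (0::'a) p \<noteq> {}" using p_pos by simp
    show "0 \<le> c * (2*\<epsilon>)" using c_pos eps_pos by simp
    show "c * (2*\<epsilon>) < 1"
    proof -
      have "c * (2*\<epsilon>) < 1 * (2*\<epsilon>)" using c_lt_1 eps_pos by (intro mult_strict_right_mono) auto
      then show ?thesis using eps_le by simp
    qed
    show "f ` cball 0 p \<subseteq> cball 0 p"
    proof clarify
      fix w assume w: "w \<in> cball (0::'a) p"
      have "norm (f w) \<le> c * (norm v + 4*\<epsilon>*p)"
        unfolding f_def by (rule norm_inv_D1_graph_le[OF w])
      also have "\<dots> \<le> c * (R + 4*\<epsilon>*p)" using v c_pos by (intro mult_left_mono) auto
      finally show "f w \<in> cball 0 p" using R_cond by simp
    qed
    fix x y :: 'a assume x: "x \<in> cball 0 p" and y: "y \<in> cball 0 p"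
    have "f x - f y = inv D1 (fst (H (y, G y) - H (x, G x)))"
      unfolding f_def by (simp add: linear_diff[OF linear_inv_D1, symmetric])
    then have "norm (f x - f y) \<le> c * norm (fst (H (y, G y) - H (x, G x)))"
      using norm_inv_D1_le by simp
    also have "\<dots> \<le> c * (2 * \<epsilon> * norm (y - x))"
      using H_graph_lipschitz[OF y x] norm_fst_le_norm c_pos by (meson mult_left_mono order.trans less_imp_le)
    finally show "dist (f x) (f y) \<le> c * (2*\<epsilon>) * dist x y"
      by (simp add: dist_norm norm_minus_commute)
  qed
  then obtain w where w: "w \<in> cball 0 p" "f w = w" by blast
  then have "D1 w = v - fst (H (w, G w))" using D1_inv_D1 unfolding f_def by metis
  then have "phi G w = v" unfolding phi_def by simp
  then show ?thesis using w by blast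
qed

lemma phi_inv:
  assumes "v \<in> cball 0 R"
  shows "phi_inv G v \<in> cball 0 p" "phi G (phi_inv G v) = v"
proof -
  have "\<exists>!w. w \<in> cball 0 p \<and> phi G w = v" using phi_surj[OF assms] phi_inj by blast
  from theI'[OF this] show "phi_inv G v \<in> cball 0 p" "phi G (phi_inv G v) = v"
    unfolding phi_inv_def by auto
qed

lemma phi_inv_eq: "w \<in> cball 0 p \<Longrightarrow> phi G w = v \<Longrightarrow> phi_inv G v = w"
  unfolding phi_inv_def using phi_inj by (intro the_equality) auto

lemma phi_inv_lipschitz:
  assumes "v \<in> cball 0 R" "v' \<in> cball 0 R"
  shows "norm (phi_inv G v - phi_inv G v') \<le> norm (v - v')"
  using expansion_le_phi_diff[OF phi_inv(1)[OF assms(1)] phi_inv(1)[OF assms(2)]]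
    phi_inv(2)[OF assms(1)] phi_inv(2)[OF assms(2)]
  by (auto intro: le_if_expansion_mult_le)

lemma norm_phi_inv_lt:
  assumes "norm v < R"
  shows "norm (phi_inv G v) < p"
proof -
  have v: "v \<in> cball 0 R" using assms by simp
  define w where "w = phi_inv G v"
  have w: "w \<in> cball 0 p" "D1 w = v - fst (H (w, G w))"
    using phi_inv[OF v] unfolding w_def phi_def by (auto simp: algebra_simps)
  have "w = inv D1 (v - fst (H (w, G w)))"
    using w(2) D1_bij by (metis bij_is_inj inv_f_f)
  then have "norm w \<le> c * (norm v + 4*\<epsilon>*p)"
    using norm_inv_D1_graph_le[OF w(1), of v] by simp
  also have "\<dots> < c * (R + 4*\<epsilon>*p)" using assms c_pos by simp
  finally show ?thesis using R_cond unfolding w_def by simp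
qed

lemma norm_phi_inv_0_le: "norm (phi_inv G 0) \<le> 2 * \<epsilon> * \<eta>"
proof -
  have z: "(0::'a) \<in> cball 0 R" "(0::'a) \<in> cball 0 p" using p_le_R p_pos by auto
  have "expansion * norm (phi_inv G 0 - 0) \<le> norm (phi G (phi_inv G 0) - phi G 0)"
    by (rule expansion_le_phi_diff[OF phi_inv(1)[OF z(1)] z(2)])
  also have "\<dots> = norm (fst (H (0, G 0)))"
    using phi_inv(2)[OF z(1)] unfolding phi_def by (simp add: linear_0[OF D1_linear])
  also have "\<dots> \<le> 2 * \<epsilon> * \<eta>"
    using norm_H_graph_0_le norm_fst_le_norm order.trans by blast
  finally show ?thesis using le_if_expansion_mult_le by simp
qed

end

end

context graph_transform
begin

definition F :: "'a \<times> 'b \<Rightarrow> 'a \<times> 'b" where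
  "F z = (D1 (fst z), D2 (snd z)) + H z"

context
  fixes G :: "'a \<Rightarrow> 'b"
  assumes adm: "adm_fun \<delta> p \<eta> G"
begin

lemma H_graph_has_derivative_at:
  assumes "norm w < p"
  shows "((\<lambda>w. H (w, G w)) has_derivative
    (\<lambda>x. blinfun_apply (dH (w, G w)) (x, blinfun_apply (dG G w) x))) (at w)"
  using has_derivative_compose[OF has_derivative_Pair[OF has_derivative_ident G_has_derivative_at[OF adm assms]]
      H_has_derivative_at[OF graph_point_in_cball(3)[OF adm]]] assms
  by simp

lemma phi_has_derivative_at:
  assumes "norm w < p"
  shows "(phi G has_derivative push_hor (dG G w) (dH (w, G w))) (at w)"
  unfolding phi_def[abs_def] push_hor_def[abs_def]
  by (intro has_derivative_add linear_imp_has_derivative[OF D1_linear]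
      has_derivative_fst[OF H_graph_has_derivative_at[OF assms]])

lemma psi_has_derivative_at:
  assumes "norm w < p"
  shows "(psi G has_derivative push_vert (dG G w) (dH (w, G w))) (at w)"
  unfolding psi_def[abs_def] push_vert_def[abs_def]
  using D2_linear linear_conv_bounded_linear
  by (intro has_derivative_add bounded_linear.has_derivative[OF _ G_has_derivative_at[OF adm assms]]
      has_derivative_snd[OF H_graph_has_derivative_at[OF assms]]) auto

lemma norm_dG_dH_at_phi_inv:
  assumes "v \<in> cball 0 R"
  shows "norm (dG G (phi_inv G v)) \<le> 1" "norm (dH (phi_inv G v, G (phi_inv G v))) \<le> \<epsilon>"
  using norm_dG_le_half[OF adm phi_inv(1)[OF adm assms]]
    norm_dH_le_eps[OF graph_point_in_cball(1)[OF adm phi_inv(1)[OF adm assms]]] by auto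

lemma phi_inv_has_derivative_at:
  assumes v: "norm v < R"
  shows "(phi_inv G has_derivative inv (push_hor (dG G (phi_inv G v)) (dH (phi_inv G v, G (phi_inv G v)))))
    (at v)"
proof -
  have vR: "v \<in> cball 0 R" using v by simp
  note bounds = norm_dG_dH_at_phi_inv[OF vR]
  have "1-lipschitz_on (cball 0 R) (phi_inv G)"
    by (rule lipschitz_onI) (auto simp: dist_norm intro: phi_inv_lipschitz[OF adm])
  then have "continuous_on (cball 0 R) (phi_inv G)"
    by (rule lipschitz_on_continuous_on)
  then have cont: "continuous (at v) (phi_inv G)"
    using continuous_on_interior v by fastforce
  show ?thesis
  proof (rule has_derivative_inverse_basic[where f = "phi G" and T = "ball 0 R"])
    show "(phi G has_derivative push_hor (dG G (phi_inv G v)) (dH (phi_inv G v, G (phi_inv G v))))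
        (at (phi_inv G v))"
      by (rule phi_has_derivative_at[OF norm_phi_inv_lt[OF adm v]])
    show "bounded_linear (inv (push_hor (dG G (phi_inv G v)) (dH (phi_inv G v, G (phi_inv G v)))))"
      using linear_inv_push_hor[OF bounds] linear_conv_bounded_linear by blast
    show "inv (push_hor (dG G (phi_inv G v)) (dH (phi_inv G v, G (phi_inv G v))))
        \<circ> push_hor (dG G (phi_inv G v)) (dH (phi_inv G v, G (phi_inv G v))) = id"
      using push_hor_inv(2)[OF bounds] by (simp add: fun_eq_iff)
    show "\<And>z. z \<in> ball 0 R \<Longrightarrow> phi G (phi_inv G z) = z" using phi_inv(2)[OF adm] by simp
  qed (use v cont in auto)
qed

lemma Gtilde_has_derivative_at:
  assumes "norm v < R"
  shows "(Gtilde G has_derivative dGtilde G v) (at v)"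
  using has_derivative_compose[OF phi_inv_has_derivative_at[OF assms]
      psi_has_derivative_at[OF norm_phi_inv_lt[OF adm assms]]]
  unfolding Gtilde_def[abs_def] dGtilde_def push_slope_def comp_def .

lemma bounded_linear_dGtilde: "v \<in> cball 0 R \<Longrightarrow> bounded_linear (dGtilde G v)"
  unfolding dGtilde_def using bounded_linear_push_slope norm_dG_dH_at_phi_inv by blast

lemma norm_Blinfun_dGtilde_le:
  assumes "v \<in> cball 0 R"
  shows "norm (Blinfun (dGtilde G v))
    \<le> (c * norm (dG G (phi_inv G v)) + 2 * norm (dH (phi_inv G v, G (phi_inv G v)))) / expansion"
proof (rule norm_blinfun_bound)
  show "0 \<le> (c * norm (dG G (phi_inv G v)) + 2 * norm (dH (phi_inv G v, G (phi_inv G v)))) / expansion"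
    using c_pos expansion_pos by simp
  show "norm (blinfun_apply (Blinfun (dGtilde G v)) x)
      \<le> (c * norm (dG G (phi_inv G v)) + 2 * norm (dH (phi_inv G v, G (phi_inv G v)))) / expansion
        * norm x" for x
    unfolding bounded_linear_Blinfun_apply[OF bounded_linear_dGtilde[OF assms]]
    unfolding dGtilde_def
    by (rule norm_push_slope_le[OF norm_dG_dH_at_phi_inv[OF assms]])
qed

lemma dfun_Gtilde:
  assumes "v \<in> cball 0 pt" and "\<And>x. x \<in> cball 0 pt \<Longrightarrow> G' x = Gtilde G x"
  shows "dfun (cball 0 pt) G' v = Blinfun (dGtilde G v)" "G' differentiable (at v within cball 0 pt)"
  using dfun_eq_if_has_derivative[OF convex_cball _ assms(1) Gtilde_has_derivative_at assms(2)]
    pt_pos pt_lt_R assms(1) by auto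

lemma graph_Gtilde_subset: "graph_on pt (Gtilde G) \<subseteq> F ` graph_on p G"
proof clarify
  fix z assume "z \<in> graph_on pt (Gtilde G)"
  then obtain v where v: "v \<in> cball 0 pt" and z: "z = (v, Gtilde G v)" unfolding graph_on_def by blast
  have vR: "v \<in> cball 0 R" using v pt_lt_R by simp
  have "z = F (phi_inv G v, G (phi_inv G v))"
    using phi_inv(2)[OF adm vR] unfolding z F_def Gtilde_def psi_def phi_def by (simp add: prod_eq_iff)
  moreover have "(phi_inv G v, G (phi_inv G v)) \<in> graph_on p G"
    unfolding graph_on_def using phi_inv(1)[OF adm vR] by blast
  ultimately show "z \<in> F ` graph_on p G" by blast
qed

lemma eq_Gtilde_if_graph_subset:
  assumes "graph_on pt G' \<subseteq> F ` graph_on p G" "v \<in> cball 0 pt"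
  shows "G' v = Gtilde G v"
proof -
  obtain w where w: "w \<in> cball 0 p" and e: "(v, G' v) = F (w, G w)"
    using assms unfolding graph_on_def by blast
  then have "v = fst (F (w, G w))" "G' v = snd (F (w, G w))"
    by (metis fst_conv, metis snd_conv)
  then have "phi G w = v" "G' v = psi G w"
    unfolding F_def phi_def psi_def by simp_all
  then show ?thesis using phi_inv_eq[OF adm w] unfolding Gtilde_def by simp
qed

end

lemma norm_dGtilde_diff_le:
  assumes adm1: "adm_fun \<delta> p \<eta> G1" and adm2: "adm_fun \<delta> p \<eta> G2"
    and v1: "v1 \<in> cball 0 R" and v2: "v2 \<in> cball 0 R"
  shows "norm (Blinfun (dGtilde G1 v1) - Blinfun (dGtilde G2 v2)) \<le>
    ((c + 2*\<epsilon>) * norm (dG G1 (phi_inv G1 v1) - dG G2 (phi_inv G2 v2))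
      + 4 * norm (dH (phi_inv G1 v1, G1 (phi_inv G1 v1)) - dH (phi_inv G2 v2, G2 (phi_inv G2 v2))))
    / expansion"
proof (rule norm_blinfun_bound)
  show "0 \<le> ((c + 2*\<epsilon>) * norm (dG G1 (phi_inv G1 v1) - dG G2 (phi_inv G2 v2))
      + 4 * norm (dH (phi_inv G1 v1, G1 (phi_inv G1 v1)) - dH (phi_inv G2 v2, G2 (phi_inv G2 v2))))
    / expansion"
    using c_pos eps_pos expansion_pos by simp
  fix x
  show "norm (blinfun_apply (Blinfun (dGtilde G1 v1) - Blinfun (dGtilde G2 v2)) x)
    \<le> ((c + 2*\<epsilon>) * norm (dG G1 (phi_inv G1 v1) - dG G2 (phi_inv G2 v2))
      + 4 * norm (dH (phi_inv G1 v1, G1 (phi_inv G1 v1)) - dH (phi_inv G2 v2, G2 (phi_inv G2 v2))))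
    / expansion * norm x"
    unfolding blinfun.diff_left bounded_linear_Blinfun_apply[OF bounded_linear_dGtilde[OF adm1 v1]]
      bounded_linear_Blinfun_apply[OF bounded_linear_dGtilde[OF adm2 v2]]
    unfolding dGtilde_def
    by (rule norm_push_slope_diff_le[OF norm_dG_dH_at_phi_inv[OF adm1 v1]
          norm_dG_dH_at_phi_inv[OF adm2 v2] slope_bound_cond])
qed

end

context graph_transform
begin

lemma etat_ge_mult: "exp (-\<epsilon>) * \<eta> \<le> \<eta>t"
  using etat_ge eta_pos by (simp add: le_divide_eq)

lemma etat_powr_ge: "exp (-\<epsilon>) * \<eta> powr \<delta> \<le> \<eta>t powr \<delta>"
proof -
  have "exp (-\<epsilon>) \<le> exp (-\<epsilon>) powr \<delta>"
    using powr_mono'[of \<delta> 1 "exp (-\<epsilon>)"] eps_pos delta_lt_1 by simp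
  then have "exp (-\<epsilon>) * \<eta> powr \<delta> \<le> exp (-\<epsilon>) powr \<delta> * \<eta> powr \<delta>" by (intro mult_right_mono) auto
  also have "\<dots> = (exp (-\<epsilon>) * \<eta>) powr \<delta>" using eta_pos by (simp add: powr_mult)
  also have "\<dots> \<le> \<eta>t powr \<delta>" using etat_ge_mult eta_pos delta_pos by (intro powr_mono2) auto
  finally show ?thesis .
qed

context
  fixes G :: "'a \<Rightarrow> 'b"
  assumes adm: "adm_fun \<delta> p \<eta> G"
begin

lemma phi_inv_0: "phi_inv G 0 \<in> cball 0 p" "norm (phi_inv G 0) \<le> 2 * \<epsilon> * \<eta>"
  using phi_inv(1)[OF adm, of 0] p_le_R p_pos norm_phi_inv_0_le[OF adm] by auto

lemma norm_Gtilde_0_le: "norm (Gtilde G 0) \<le> \<eta>t / 1000"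
proof -
  define w where "w = phi_inv G 0"
  have w: "w \<in> cball 0 p" "norm w \<le> 2 * \<epsilon> * \<eta>" using phi_inv_0 unfolding w_def by auto
  have "norm (D2 (G w)) \<le> c * (\<eta>/1000 + norm w / 2)"
    using norm_D2_le[of "G w"] norm_G_le[OF adm w(1)] c_pos by (smt (verit) mult_left_mono)
  also have "\<dots> \<le> c * (\<eta>/1000) + \<epsilon> * \<eta>"
  proof -
    have "c * (norm w / 2) \<le> 1 * (\<epsilon> * \<eta>)"
      using w(2) c_lt_1 c_pos eps_pos eta_pos by (intro mult_mono) auto
    then show ?thesis by (simp add: algebra_simps)
  qed
  finally have D2_part: "norm (D2 (G w)) \<le> c * (\<eta>/1000) + \<epsilon> * \<eta>" .
  have "norm (H (w, G w)) \<le> 2 * \<epsilon> * \<eta> + 2 * \<epsilon> * (2 * \<epsilon> * \<eta>)"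
    using norm_H_graph_le[OF adm w(1)] w(2) eps_pos by (smt (verit) mult_left_mono)
  also have "\<dots> \<le> 3 * \<epsilon> * \<eta>"
    using mult_right_mono[OF eps_le, of "\<epsilon> * \<eta>"] eps_pos eta_pos by (simp add: algebra_simps)
  finally have H_part: "norm (snd (H (w, G w))) \<le> 3 * \<epsilon> * \<eta>"
    using norm_snd_le_norm order.trans by blast
  have "norm (Gtilde G 0) \<le> norm (D2 (G w)) + norm (snd (H (w, G w)))"
    unfolding Gtilde_def psi_def w_def by (rule norm_triangle_ineq)
  also have "\<dots> \<le> (c/1000 + 4 * \<epsilon>) * \<eta>" using D2_part H_part by (simp add: algebra_simps)
  also have "\<dots> \<le> exp (-\<epsilon>) / 1000 * \<eta>" using offset_at_0_cond eta_pos by (intro mult_right_mono) auto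
  also have "\<dots> \<le> \<eta>t / 1000" using etat_ge_mult by simp
  finally show ?thesis .
qed

lemma dfun_Gtilde_self: "v \<in> cball 0 pt \<Longrightarrow> dfun (cball 0 pt) (Gtilde G) v = Blinfun (dGtilde G v)"
  using dfun_Gtilde(1)[OF adm, of v "Gtilde G"] by simp

lemma norm_dfun_Gtilde_0_le: "norm (dfun (cball 0 pt) (Gtilde G) 0) \<le> 1/2 * \<eta>t powr \<delta>"
proof -
  define w where "w = phi_inv G 0"
  have w: "w \<in> cball 0 p" "norm w \<le> 2 * \<epsilon> * \<eta>" using phi_inv_0 unfolding w_def by auto
  have "norm (dG G w - dG G 0) \<le> hol_dG G * norm (w - 0) powr \<delta>"
    using dG_hol_bound[OF adm w(1), of 0] p_pos by simp
  also have "\<dots> \<le> 1/2 * (2 * \<epsilon> * \<eta>) powr \<delta>"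
    using sup_hol_dG[OF adm] w(2) delta_pos by (intro mult_mono powr_mono2) auto
  also have "\<dots> = 1/2 * ((2*\<epsilon>) powr \<delta> * \<eta> powr \<delta>)" using eps_pos eta_pos by (simp add: powr_mult)
  finally have dG_part: "norm (dG G w) \<le> (1/2 + (2*\<epsilon>) powr \<delta> / 2) * \<eta> powr \<delta>"
    using norm_dG_0[OF adm] norm_triangle_ineq2[of "dG G w" "dG G 0"] by (simp add: algebra_simps)
  have "norm (w, G w) \<le> 3/2 * (2 * \<epsilon> * \<eta>) + \<eta>/1000"
    using norm_graph_point_le[OF adm w(1)] w(2) by simp
  also have "\<dots> \<le> \<eta>" using mult_right_mono[OF eps_le less_imp_le[OF eta_pos]] eta_pos by linarith
  finally have dH_part: "norm (dH (w, G w)) \<le> \<epsilon> * \<eta> powr \<delta>" using norm_dH_le_eta by simp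
  have "(0::'a) \<in> cball 0 R" "(0::'a) \<in> cball 0 pt" using p_le_R p_pos pt_pos by auto
  then have "norm (dfun (cball 0 pt) (Gtilde G) 0) \<le> (c * norm (dG G w) + 2 * norm (dH (w, G w))) / expansion"
    using dfun_Gtilde_self norm_Blinfun_dGtilde_le[OF adm] unfolding w_def by simp
  also have "\<dots> \<le> (c * (1/2 + (2*\<epsilon>) powr \<delta> / 2) + 2*\<epsilon>) * \<eta> powr \<delta> / expansion"
    using mult_left_mono[OF dG_part, of c] dH_part c_pos expansion_pos
    by (intro divide_right_mono) (auto simp: algebra_simps)
  also have "\<dots> \<le> (exp (-\<epsilon>) * expansion / 2) * \<eta> powr \<delta> / expansion"
    using slope_at_0_cond expansion_pos by (intro divide_right_mono mult_right_mono) auto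
  also have "\<dots> = 1/2 * (exp (-\<epsilon>) * \<eta> powr \<delta>)" using expansion_pos by simp
  also have "\<dots> \<le> 1/2 * \<eta>t powr \<delta>" using etat_powr_ge by simp
  finally show ?thesis .
qed

lemma dfun_Gtilde_hol_bound:
  assumes v: "v \<in> cball 0 pt" and v': "v' \<in> cball 0 pt"
  shows "norm (dfun (cball 0 pt) (Gtilde G) v - dfun (cball 0 pt) (Gtilde G) v')
    \<le> ((c + 2*\<epsilon>) * hol_dG G + 8*\<epsilon>) / expansion * norm (v - v') powr \<delta>"
proof -
  have vR: "v \<in> cball 0 R" "v' \<in> cball 0 R" using v v' pt_lt_R by auto
  define w where "w = phi_inv G v"
  define w' where "w' = phi_inv G v'"
  have w: "w \<in> cball 0 p" "w' \<in> cball 0 p" using phi_inv(1)[OF adm] vR unfolding w_def w'_def by auto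
  have ww: "norm (w - w') \<le> norm (v - v')" unfolding w_def w'_def by (rule phi_inv_lipschitz[OF adm vR])
  have "norm (dG G w - dG G w') \<le> hol_dG G * norm (v - v') powr \<delta>"
    using dG_hol_bound[OF adm w] mult_left_mono[OF powr_mono2[OF _ _ ww] sup_hol_dG(2)[OF adm], of \<delta>]
      delta_pos by fastforce
  moreover have "norm (dH (w, G w) - dH (w', G w')) \<le> \<epsilon> * (2 * norm (v - v') powr \<delta>)"
  proof -
    have "norm ((w, G w) - (w', G w')) \<le> 3/2 * norm (v - v')"
      using norm_graph_point_diff_le[OF adm w] ww by simp
    then have "norm ((w, G w) - (w', G w')) powr \<delta> \<le> 2 * norm (v - v') powr \<delta>"
      using delta_pos delta_lt_1 by (intro powr_le_two_mult[where a="3/2"]) auto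
    then show ?thesis
      using dH_hol_bound[OF graph_point_in_cball(2)[OF adm w(1)] graph_point_in_cball(2)[OF adm w(2)]] eps_pos
      by (meson mult_left_mono order.trans less_imp_le)
  qed
  ultimately have "((c + 2*\<epsilon>) * norm (dG G w - dG G w') + 4 * norm (dH (w, G w) - dH (w', G w'))) / expansion
      \<le> ((c + 2*\<epsilon>) * (hol_dG G * norm (v - v') powr \<delta>) + 4 * (\<epsilon> * (2 * norm (v - v') powr \<delta>)))
        / expansion"
    using c_pos eps_pos expansion_pos by (intro divide_right_mono add_mono mult_left_mono) auto
  then show ?thesis
    using norm_dGtilde_diff_le[OF adm adm vR] dfun_Gtilde_self[OF v] dfun_Gtilde_self[OF v']
    unfolding w_def w'_def by (simp add: algebra_simps)
qed

lemma c0norm_dfun_Gtilde_le: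
  "c0norm (cball 0 pt) (dfun (cball 0 pt) (Gtilde G)) \<le> (c * sup_dG G + 2 * \<epsilon>) / expansion"
proof (rule c0norm_least)
  show "cball (0::'a) pt \<noteq> {}" using pt_pos by simp
  fix v :: 'a assume v: "v \<in> cball 0 pt"
  then have vR: "v \<in> cball 0 R" using pt_lt_R by simp
  have "norm (dfun (cball 0 pt) (Gtilde G) v)
      \<le> (c * norm (dG G (phi_inv G v)) + 2 * norm (dH (phi_inv G v, G (phi_inv G v)))) / expansion"
    using dfun_Gtilde_self[OF v] norm_Blinfun_dGtilde_le[OF adm vR] by simp
  also have "\<dots> \<le> (c * sup_dG G + 2 * \<epsilon>) / expansion"
    using norm_dG_le_sup[OF adm phi_inv(1)[OF adm vR]] norm_dG_dH_at_phi_inv(2)[OF adm vR] c_pos expansion_pos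
    by (intro divide_right_mono add_mono mult_left_mono) auto
  finally show "norm (dfun (cball 0 pt) (Gtilde G) v) \<le> (c * sup_dG G + 2 * \<epsilon>) / expansion" .
qed

lemma Gtilde_adm: "adm_fun \<delta> pt \<eta>t (Gtilde G)"
proof -
  obtain x :: 'a where "norm x = pt" using vector_choose_size pt_pos by (meson less_imp_le)
  then have pts: "x \<in> cball 0 pt" "(0::'a) \<in> cball 0 pt" "x \<noteq> 0" using pt_pos by auto
  define B where "B = ((c + 2*\<epsilon>) * hol_dG G + 8*\<epsilon>) / expansion"
  have hol: "bdd_above (hol_quots \<delta> (cball 0 pt) (dfun (cball 0 pt) (Gtilde G)))"
    "hol \<delta> (cball 0 pt) (dfun (cball 0 pt) (Gtilde G)) \<le> B"
    unfolding B_def using hol_least[OF dfun_Gtilde_hol_bound pts] by auto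
  have "(c * sup_dG G + 2 * \<epsilon>) + ((c + 2*\<epsilon>) * hol_dG G + 8*\<epsilon>)
      \<le> (c + 2*\<epsilon>) * (sup_dG G + hol_dG G) + 10 * \<epsilon>"
    using sup_hol_dG[OF adm] eps_pos by (simp add: algebra_simps)
  also have "\<dots> \<le> (c + 2*\<epsilon>) * (1/2) + 10 * \<epsilon>"
    using sup_hol_dG[OF adm] c_pos eps_pos by (intro add_right_mono mult_left_mono) auto
  also have "\<dots> \<le> expansion / 2" using slope_cond by simp
  finally have "(c * sup_dG G + 2 * \<epsilon>) / expansion + B \<le> 1/2"
    unfolding B_def using expansion_pos by (simp add: add_divide_distrib[symmetric] divide_le_eq)
  then have "c0norm (cball 0 pt) (dfun (cball 0 pt) (Gtilde G))
      + hol \<delta> (cball 0 pt) (dfun (cball 0 pt) (Gtilde G)) \<le> 1/2"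
    using c0norm_dfun_Gtilde_le hol(2) by linarith
  moreover have "C1delta_on \<delta> (cball 0 pt) (Gtilde G)"
    unfolding C1delta_on_def using hol(1) dfun_Gtilde(2)[OF adm, of _ "Gtilde G"] by simp
  ultimately show ?thesis
    unfolding adm_fun_def ten_powr_minus_3 using norm_Gtilde_0_le norm_dfun_Gtilde_0_le by simp
qed

lemma transform_unique: "\<exists>!W. W \<in> Mu \<delta> pt \<eta>t \<and> W \<subseteq> F ` graph_on p G"
proof (rule ex1I)
  show "graph_on pt (Gtilde G) \<in> Mu \<delta> pt \<eta>t \<and> graph_on pt (Gtilde G) \<subseteq> F ` graph_on p G"
    using Gtilde_adm graph_Gtilde_subset[OF adm] unfolding Mu_def by blast
  fix W assume W: "W \<in> Mu \<delta> pt \<eta>t \<and> W \<subseteq> F ` graph_on p G"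
  then obtain G' where G': "W = graph_on pt G'" unfolding Mu_def by blast
  then have "G' v = Gtilde G v" if "v \<in> cball 0 pt" for v
    using eq_Gtilde_if_graph_subset[OF adm _ that] W by blast
  then show "W = graph_on pt (Gtilde G)" unfolding G' graph_on_def by (metis (no_types, lifting))
qed

end

end

section \<open>Contraction estimates\<close>

context graph_transform
begin

context
  fixes G1 G2 :: "'a \<Rightarrow> 'b"
  assumes adm1: "adm_fun \<delta> p \<eta> G1" and adm2: "adm_fun \<delta> p \<eta> G2"
begin

lemma norm_G_diff_le_dC0:
  assumes w: "w \<in> cball 0 p"
  shows "norm (G1 w - G2 w) \<le> dC0 p G1 G2"
proof -
  have "norm (G1 x - G2 x) \<le> \<eta>/500 + p" if x: "x \<in> cball 0 p" for x
    using norm_triangle_ineq4[of "G1 x" "G2 x"] norm_G_le[OF adm1 x] norm_G_le[OF adm2 x] x by simp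
  then have "bdd_above ((\<lambda>x. norm (G1 x - G2 x)) ` cball 0 p)" by (rule bdd_aboveI2)
  from c0norm_upper[OF this w] show ?thesis unfolding dC0_def .
qed

lemma dC0_nonneg: "0 \<le> dC0 p G1 G2"
  using norm_G_diff_le_dC0[of 0] p_pos by (smt (verit) centre_in_cball norm_ge_zero)

lemma norm_dG_diff_le:
  assumes w: "w \<in> cball 0 p"
  shows "norm (dG G1 w - dG G2 w) \<le> c0norm (cball 0 p) (\<lambda>v. dG G1 v - dG G2 v)"
proof -
  have "norm (dG G1 x - dG G2 x) \<le> 1" if x: "x \<in> cball 0 p" for x
    using norm_triangle_ineq4[of "dG G1 x" "dG G2 x"] norm_dG_le_half[OF adm1 x] norm_dG_le_half[OF adm2 x]
    by simp
  then have "bdd_above ((\<lambda>x. norm (dG G1 x - dG G2 x)) ` cball 0 p)" by (rule bdd_aboveI2)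
  from c0norm_upper[OF this w] show ?thesis .
qed

lemma dC1_eq: "dC1 p G1 G2 = dC0 p G1 G2 + c0norm (cball 0 p) (\<lambda>v. dG G1 v - dG G2 v)"
  unfolding dC1_def dC0_def dG_eq ..

context
  fixes v :: 'a
  assumes v: "v \<in> cball 0 pt"
begin

lemma v_in_cball_R: "v \<in> cball 0 R"
  using v pt_lt_R by simp

lemma phi_inv_in_cball: "phi_inv G1 v \<in> cball 0 p" "phi_inv G2 v \<in> cball 0 p"
  using phi_inv(1)[OF adm1 v_in_cball_R] phi_inv(1)[OF adm2 v_in_cball_R] by auto

lemma norm_phi_inv_diff_le: "norm (phi_inv G1 v - phi_inv G2 v) \<le> \<epsilon> * dC0 p G1 G2"
proof -
  define w1 where "w1 = phi_inv G1 v"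
  define w2 where "w2 = phi_inv G2 v"
  note w = phi_inv_in_cball[folded w1_def w2_def]
  have "expansion * norm (w1 - w2) \<le> norm (phi G2 w1 - phi G2 w2)"
    by (rule expansion_le_phi_diff[OF adm2 w])
  also have "phi G2 w2 = phi G1 w1"
    unfolding w1_def w2_def using phi_inv(2)[OF adm1 v_in_cball_R] phi_inv(2)[OF adm2 v_in_cball_R] by simp
  also have "phi G2 w1 - phi G1 w1 = fst (H (w1, G2 w1) - H (w1, G1 w1))" unfolding phi_def by simp
  also have "norm (fst (H (w1, G2 w1) - H (w1, G1 w1))) \<le> \<epsilon> * norm ((w1, G2 w1) - (w1, G1 w1))"
    by (rule order.trans[OF norm_fst_le_norm
          H_lipschitz[OF graph_point_in_cball(1)[OF adm2 w(1)] graph_point_in_cball(1)[OF adm1 w(1)]]])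
  also have "norm ((w1, G2 w1) - (w1, G1 w1)) = norm (G1 w1 - G2 w1)"
    by (simp add: norm_Pair norm_minus_commute)
  also have "\<epsilon> * norm (G1 w1 - G2 w1) \<le> \<epsilon> * dC0 p G1 G2"
    using norm_G_diff_le_dC0[OF w(1)] eps_pos by simp
  finally show ?thesis unfolding w1_def w2_def using le_if_expansion_mult_le by simp
qed

lemma norm_G_phi_inv_diff_le:
  "norm (G1 (phi_inv G1 v) - G2 (phi_inv G2 v)) \<le> dC0 p G1 G2 + \<epsilon> * dC0 p G1 G2 / 2"
proof -
  define w1 where "w1 = phi_inv G1 v"
  define w2 where "w2 = phi_inv G2 v"
  note w = phi_inv_in_cball[folded w1_def w2_def]
  have "norm (G1 w1 - G2 w2) \<le> norm (G1 w1 - G2 w1) + norm (G2 w1 - G2 w2)"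
    using norm_triangle_ineq[of "G1 w1 - G2 w1" "G2 w1 - G2 w2"] by simp
  also have "\<dots> \<le> dC0 p G1 G2 + 1/2 * norm (w1 - w2)"
    using norm_G_diff_le_dC0[OF w(1)] G_lipschitz[OF adm2 w] by (rule add_mono)
  finally show ?thesis using norm_phi_inv_diff_le unfolding w1_def w2_def by simp
qed

lemma norm_graph_points_diff_le:
  "norm ((phi_inv G1 v, G1 (phi_inv G1 v)) - (phi_inv G2 v, G2 (phi_inv G2 v))) \<le> 2 * dC0 p G1 G2"
proof -
  have "norm ((phi_inv G1 v, G1 (phi_inv G1 v)) - (phi_inv G2 v, G2 (phi_inv G2 v)))
      \<le> \<epsilon> * dC0 p G1 G2 + (dC0 p G1 G2 + \<epsilon> * dC0 p G1 G2 / 2)"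
    using norm_Pair_le[of "phi_inv G1 v - phi_inv G2 v" "G1 (phi_inv G1 v) - G2 (phi_inv G2 v)"]
      norm_phi_inv_diff_le norm_G_phi_inv_diff_le by simp
  also have "\<dots> \<le> 2 * dC0 p G1 G2"
    using mult_right_mono[OF eps_le dC0_nonneg] dC0_nonneg by linarith
  finally show ?thesis .
qed

lemma norm_Gtilde_diff_le: "norm (Gtilde G1 v - Gtilde G2 v) \<le> (c + 4*\<epsilon>) * dC0 p G1 G2"
proof -
  define w1 where "w1 = phi_inv G1 v"
  define w2 where "w2 = phi_inv G2 v"
  note w = phi_inv_in_cball[folded w1_def w2_def]
  let ?d = "dC0 p G1 G2"
  have "norm (D2 (G1 w1 - G2 w2)) \<le> c * (?d + \<epsilon> * ?d / 2)"
    using norm_D2_le[of "G1 w1 - G2 w2"] mult_left_mono[OF norm_G_phi_inv_diff_le less_imp_le[OF c_pos]]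
    unfolding w1_def w2_def by linarith
  also have "\<dots> \<le> c * ?d + \<epsilon> * ?d / 2"
  proof -
    have "c * (\<epsilon> * ?d / 2) \<le> 1 * (\<epsilon> * ?d / 2)"
      using c_lt_1 eps_pos dC0_nonneg by (intro mult_right_mono) auto
    moreover have "c * (?d + \<epsilon> * ?d / 2) = c * ?d + c * (\<epsilon> * ?d / 2)" by (simp only: distrib_left)
    ultimately show ?thesis by linarith
  qed
  finally have D2_part: "norm (D2 (G1 w1 - G2 w2)) \<le> c * ?d + \<epsilon> * ?d / 2" .
  have "norm (H (w1, G1 w1) - H (w2, G2 w2)) \<le> \<epsilon> * norm ((w1, G1 w1) - (w2, G2 w2))"
    by (rule H_lipschitz[OF graph_point_in_cball(1)[OF adm1 w(1)] graph_point_in_cball(1)[OF adm2 w(2)]])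
  also have "\<dots> \<le> \<epsilon> * (2 * ?d)"
    using norm_graph_points_diff_le eps_pos unfolding w1_def w2_def by (intro mult_left_mono) auto
  finally have H_part: "norm (snd (H (w1, G1 w1) - H (w2, G2 w2))) \<le> \<epsilon> * (2 * ?d)"
    using norm_snd_le_norm order.trans by blast
  have "Gtilde G1 v - Gtilde G2 v = D2 (G1 w1 - G2 w2) + snd (H (w1, G1 w1) - H (w2, G2 w2))"
    unfolding Gtilde_def psi_def w1_def w2_def by (simp add: linear_diff[OF D2_linear])
  then have "norm (Gtilde G1 v - Gtilde G2 v) \<le> c * ?d + \<epsilon> * ?d / 2 + \<epsilon> * (2 * ?d)"
    using norm_triangle_ineq[of "D2 (G1 w1 - G2 w2)" "snd (H (w1, G1 w1) - H (w2, G2 w2))"] D2_part H_part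
    by simp
  also have "\<dots> \<le> (c + 4*\<epsilon>) * ?d"
    using mult_nonneg_nonneg[OF less_imp_le[OF eps_pos] dC0_nonneg] by (simp add: algebra_simps)
  finally show ?thesis .
qed

lemma norm_dGtilde_diff_le_dC:
  "norm (Blinfun (dGtilde G1 v) - Blinfun (dGtilde G2 v))
    \<le> k * c0norm (cball 0 p) (\<lambda>v. dG G1 v - dG G2 v) + k * dC0 p G1 G2 powr \<delta>"
proof -
  define w1 where "w1 = phi_inv G1 v"
  define w2 where "w2 = phi_inv G2 v"
  note w = phi_inv_in_cball[folded w1_def w2_def]
  let ?d = "dC0 p G1 G2" and ?d1 = "c0norm (cball 0 p) (\<lambda>v. dG G1 v - dG G2 v)"
  have "norm (dG G1 w1 - dG G2 w2) \<le> norm (dG G1 w1 - dG G2 w1) + norm (dG G2 w1 - dG G2 w2)"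
    using norm_triangle_ineq[of "dG G1 w1 - dG G2 w1" "dG G2 w1 - dG G2 w2"] by simp
  also have "\<dots> \<le> ?d1 + hol_dG G2 * norm (w1 - w2) powr \<delta>"
    using norm_dG_diff_le[OF w(1)] dG_hol_bound[OF adm2 w] by (rule add_mono)
  also have "hol_dG G2 * norm (w1 - w2) powr \<delta> \<le> 1/2 * (\<epsilon> * ?d) powr \<delta>"
    using sup_hol_dG[OF adm2] norm_phi_inv_diff_le delta_pos unfolding w1_def w2_def
    by (intro mult_mono powr_mono2) auto
  also have "(\<epsilon> * ?d) powr \<delta> = \<epsilon> powr \<delta> * ?d powr \<delta>" using eps_pos dC0_nonneg by (simp add: powr_mult)
  finally have dG_part: "norm (dG G1 w1 - dG G2 w2) \<le> ?d1 + \<epsilon> powr \<delta> / 2 * ?d powr \<delta>" by simp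
  have "norm ((w1, G1 w1) - (w2, G2 w2)) powr \<delta> \<le> 2 * ?d powr \<delta>"
    using norm_graph_points_diff_le dC0_nonneg delta_pos delta_lt_1 unfolding w1_def w2_def
    by (intro powr_le_two_mult[where a=2]) auto
  then have dH_part: "norm (dH (w1, G1 w1) - dH (w2, G2 w2)) \<le> \<epsilon> * (2 * ?d powr \<delta>)"
    using dH_hol_bound[OF graph_point_in_cball(2)[OF adm1 w(1)] graph_point_in_cball(2)[OF adm2 w(2)]] eps_pos
    by (meson mult_left_mono order.trans less_imp_le)
  have "0 \<le> ?d1" using norm_dG_diff_le[of 0] p_pos by (smt (verit) centre_in_cball norm_ge_zero)
  have "norm (Blinfun (dGtilde G1 v) - Blinfun (dGtilde G2 v)) \<le>
      ((c + 2*\<epsilon>) * norm (dG G1 w1 - dG G2 w2) + 4 * norm (dH (w1, G1 w1) - dH (w2, G2 w2))) / expansion"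
    using norm_dGtilde_diff_le[OF adm1 adm2 v_in_cball_R v_in_cball_R] unfolding w1_def w2_def .
  also have "\<dots> \<le> ((c + 2*\<epsilon>) * (?d1 + \<epsilon> powr \<delta> / 2 * ?d powr \<delta>) + 4 * (\<epsilon> * (2 * ?d powr \<delta>)))
      / expansion"
    using dG_part dH_part c_pos eps_pos expansion_pos by (intro divide_right_mono add_mono mult_left_mono) auto
  also have "\<dots> = ((c + 2*\<epsilon>) * ?d1 + ((c + 2*\<epsilon>) * \<epsilon> powr \<delta> / 2 + 8*\<epsilon>) * ?d powr \<delta>) / expansion"
    by (simp add: algebra_simps)
  also have "\<dots> \<le> ((k * expansion) * ?d1 + (k * expansion) * ?d powr \<delta>) / expansion"
    using C1_contraction_cond \<open>0 \<le> ?d1\<close> expansion_pos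
    by (intro divide_right_mono add_mono mult_right_mono) auto
  also have "\<dots> = k * ?d1 + k * ?d powr \<delta>" using expansion_pos by (simp add: field_simps)
  finally show ?thesis .
qed

end

lemma transform_contracts:
  assumes sub1: "graph_on pt Gt1 \<subseteq> F ` graph_on p G1" and sub2: "graph_on pt Gt2 \<subseteq> F ` graph_on p G2"
  shows "dC0 pt Gt1 Gt2 \<le> k * dC0 p G1 G2" "dC1 pt Gt1 Gt2 \<le> k * (dC1 p G1 G2 + dC0 p G1 G2 powr \<delta>)"
proof -
  have ne: "cball (0::'a) pt \<noteq> {}" using pt_pos by simp
  have Gt1: "\<And>v. v \<in> cball 0 pt \<Longrightarrow> Gt1 v = Gtilde G1 v" using eq_Gtilde_if_graph_subset[OF adm1 sub1] .
  have Gt2: "\<And>v. v \<in> cball 0 pt \<Longrightarrow> Gt2 v = Gtilde G2 v" using eq_Gtilde_if_graph_subset[OF adm2 sub2] .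
  have "dC0 pt Gt1 Gt2 \<le> (c + 4*\<epsilon>) * dC0 p G1 G2"
    unfolding dC0_def[of pt] using norm_Gtilde_diff_le Gt1 Gt2 by (intro c0norm_least[OF ne]) simp
  also have "\<dots> \<le> k * dC0 p G1 G2" using C0_contraction_cond dC0_nonneg by (rule mult_right_mono)
  finally show C0: "dC0 pt Gt1 Gt2 \<le> k * dC0 p G1 G2" .
  have "c0norm (cball 0 pt) (\<lambda>v. dfun (cball 0 pt) Gt1 v - dfun (cball 0 pt) Gt2 v)
      \<le> k * c0norm (cball 0 p) (\<lambda>v. dG G1 v - dG G2 v) + k * dC0 p G1 G2 powr \<delta>"
  proof (rule c0norm_least[OF ne])
    fix v :: 'a assume v: "v \<in> cball 0 pt"
    show "norm (dfun (cball 0 pt) Gt1 v - dfun (cball 0 pt) Gt2 v)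
        \<le> k * c0norm (cball 0 p) (\<lambda>v. dG G1 v - dG G2 v) + k * dC0 p G1 G2 powr \<delta>"
      using norm_dGtilde_diff_le_dC[OF v] dfun_Gtilde(1)[OF adm1 v Gt1] dfun_Gtilde(1)[OF adm2 v Gt2]
      by simp
  qed
  moreover have "dC1 pt Gt1 Gt2
      = dC0 pt Gt1 Gt2 + c0norm (cball 0 pt) (\<lambda>v. dfun (cball 0 pt) Gt1 v - dfun (cball 0 pt) Gt2 v)"
    unfolding dC1_def dC0_def ..
  ultimately show "dC1 pt Gt1 Gt2 \<le> k * (dC1 p G1 G2 + dC0 p G1 G2 powr \<delta>)"
    using C0 unfolding dC1_eq distrib_left by linarith
qed

end

end

lemma (in graph_transform) transform_properties:
  "let F = (\<lambda>z. (D1 (fst z), D2 (snd z)) + H z) in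
    (\<forall>G. adm_fun \<delta> p \<eta> G \<longrightarrow> (\<exists>!W. W \<in> Mu \<delta> pt \<eta>t \<and> W \<subseteq> F ` graph_on p G)) \<and>
    (\<forall>G1 G2 Gt1 Gt2.
       adm_fun \<delta> p \<eta> G1 \<and> adm_fun \<delta> p \<eta> G2 \<and>
       adm_fun \<delta> pt \<eta>t Gt1 \<and> adm_fun \<delta> pt \<eta>t Gt2 \<and>
       graph_on pt Gt1 \<subseteq> F ` graph_on p G1 \<and> graph_on pt Gt2 \<subseteq> F ` graph_on p G2 \<longrightarrow>
       dC0 pt Gt1 Gt2 \<le> k * dC0 p G1 G2 \<and>
       dC1 pt Gt1 Gt2 \<le> k * (dC1 p G1 G2 + dC0 p G1 G2 powr \<delta>))"
proof -
  have F_eq: "(\<lambda>z. (D1 (fst z), D2 (snd z)) + H z) = F" by (rule ext) (simp add: F_def)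
  show ?thesis unfolding Let_def F_eq
    by (intro conjI allI impI; (elim conjE)?;
        rule transform_unique transform_contracts(1) transform_contracts(2); assumption)
qed

lemma graph_transform_intro:
  fixes D1 :: "'a::euclidean_space \<Rightarrow> 'a" and D2 :: "'b::euclidean_space \<Rightarrow> 'b"
    and H :: "'a \<times> 'b \<Rightarrow> 'a \<times> 'b"
  assumes "0 < \<delta>" "\<delta> < 1" "0 < chi" "eps_small \<delta> (exp (-chi)) (exp (-chi/2)) \<epsilon>"
    and "0 < \<epsilon>" "0 < r" "2 * r powr \<delta> < \<epsilon>" "0 < \<eta>" "\<eta> \<le> p" "p \<le> r / 2" "0 < \<eta>t" "\<eta>t \<le> pt"
    and "pt \<le> exp \<epsilon> * p" "exp (-\<epsilon>) \<le> \<eta>t / \<eta>"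
    and "linear D1" "bij D1" "onorm (inv D1) < exp (-chi)" "linear D2" "onorm D2 < exp (-chi)"
    and "C1delta_on \<delta> (cball 0 r) H" "norm (H 0) < \<epsilon> * \<eta>"
    and "\<forall>t\<in>{\<eta>..2*p}. c0norm (cball 0 t) (dfun (cball 0 r) H) < \<epsilon> * t powr \<delta>"
    and "hol \<delta> (cball 0 r) (dfun (cball 0 r) H) < \<epsilon>"
  shows "graph_transform D1 D2 (exp (-chi)) \<epsilon> \<delta> r p \<eta> pt \<eta>t (exp (-chi/2)) H"
proof -
  have onorm_bound: "norm (f y) \<le> exp (-chi) * norm y" if "linear f" "onorm f < exp (-chi)"
    for f :: "'c::euclidean_space \<Rightarrow> 'c" and y
    using onorm[of f y] mult_right_mono[OF less_imp_le[OF that(2)], of "norm y"] that(1)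
    by (simp add: linear_conv_bounded_linear)
  have "linear (inv D1)" using inj_linear_imp_inv_linear assms(15,16) bij_is_inj by blast
  moreover have "1 \<le> 1/exp (-chi) - 2*\<epsilon>" using assms(4) unfolding eps_small_def by blast
  ultimately have "expanding_contracting D1 D2 (exp (-chi)) \<epsilon>"
    using assms(5,15,16,18) onorm_bound[of "inv D1"] assms(17) onorm_bound[OF assms(18,19)]
    by (intro expanding_contracting.intro) auto
  moreover have "graph_transform_axioms (exp (-chi)) \<epsilon> \<delta> r p \<eta> pt \<eta>t (exp (-chi/2)) H"
    unfolding graph_transform_axioms_def using assms by simp
  ultimately show ?thesis by (rule graph_transform.intro)
qed

theorem propositionA2:
  fixes \<delta> chi :: real
  assumes "0 < \<delta>" "\<delta> < 1" "0 < chi"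
  shows "\<exists>\<epsilon>0>0. \<forall>\<epsilon> r p \<eta> pt \<eta>t (D1 :: 'a::euclidean_space \<Rightarrow> 'a) (D2 :: 'b::euclidean_space \<Rightarrow> 'b)
           (H :: 'a \<times> 'b \<Rightarrow> 'a \<times> 'b).
    0 < \<epsilon> \<and> \<epsilon> < \<epsilon>0 \<and>
    0 < r \<and> 2 * r powr \<delta> < \<epsilon> \<and>
    0 < \<eta> \<and> \<eta> \<le> p \<and> p \<le> r / 2 \<and>
    0 < \<eta>t \<and> \<eta>t \<le> pt \<and>
    \<comment> \<open>(GT1)\<close>
    pt \<le> exp \<epsilon> * p \<and> exp (-\<epsilon>) \<le> \<eta>t / \<eta> \<and> \<eta>t / \<eta> \<le> exp \<epsilon> \<and>
    \<comment> \<open>(GT2)\<close>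
    linear D1 \<and> bij D1 \<and> onorm (inv D1) < exp (-chi) \<and>
    linear D2 \<and> bij D2 \<and> onorm D2 < exp (-chi) \<and>
    \<comment> \<open>(GT3)\<close>
    C1delta_on \<delta> (cball 0 r) H \<and>
    norm (H 0) < \<epsilon> * \<eta> \<and>
    (\<forall>t\<in>{\<eta>..2*p}. c0norm (cball 0 t) (dfun (cball 0 r) H) < \<epsilon> * t powr \<delta>) \<and>
    hol \<delta> (cball 0 r) (dfun (cball 0 r) H) < \<epsilon>
    \<longrightarrow>
    (let F = (\<lambda>z. (D1 (fst z), D2 (snd z)) + H z) in
      (\<forall>G. adm_fun \<delta> p \<eta> G \<longrightarrow> (\<exists>!W. W \<in> Mu \<delta> pt \<eta>t \<and> W \<subseteq> F ` graph_on p G)) \<and>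
      (\<forall>G1 G2 Gt1 Gt2.
         adm_fun \<delta> p \<eta> G1 \<and> adm_fun \<delta> p \<eta> G2 \<and>
         adm_fun \<delta> pt \<eta>t Gt1 \<and> adm_fun \<delta> pt \<eta>t Gt2 \<and>
         graph_on pt Gt1 \<subseteq> F ` graph_on p G1 \<and> graph_on pt Gt2 \<subseteq> F ` graph_on p G2 \<longrightarrow>
         dC0 pt Gt1 Gt2 \<le> exp (-chi/2) * dC0 p G1 G2 \<and>
         dC1 pt Gt1 Gt2 \<le> exp (-chi/2) * (dC1 p G1 G2 + dC0 p G1 G2 powr \<delta>)))"
proof -
  have c: "0 < exp (-chi)" "exp (-chi) < 1" "exp (-chi) < exp (-chi/2)"
    "exp (-chi) * exp (-chi) < exp (-chi/2)"
    using assms(3) by (simp_all add: exp_add[symmetric])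
  obtain \<epsilon>0 where "0 < \<epsilon>0"
    and small: "\<And>\<epsilon>. 0 < \<epsilon> \<Longrightarrow> \<epsilon> < \<epsilon>0 \<Longrightarrow> eps_small \<delta> (exp (-chi)) (exp (-chi/2)) \<epsilon>"
    using eventually_eps_small[OF assms(1) c] unfolding eventually_at_right_field by blast
  show ?thesis
    by (intro exI[of _ \<epsilon>0] conjI allI impI \<open>0 < \<epsilon>0\<close>; elim conjE;
        rule graph_transform.transform_properties[OF graph_transform_intro[OF assms small]]; assumption)
qed

end
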